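(* Let $V$ be a fine diffeological vector space. Then $T_0(V)\cong V$ as diffeological vector spaces.
   Context: A diffeological space is a set with, for every open subset $U$ of every $\mathbb{R}^n$, a set of maps $U\to X$ called plots, containing constants, closed under precomposition with smooth maps, and satisfying the sheaf condition; smooth maps send plots to plots. A diffeological vector space is a vector space with a diffeology making addition and scalar multiplication smooth; the fine diffeology is the smallest such diffeology on a given vector space, and $V$ is fine if it carries it. The internal tangent space $T_x(X)$ is the colimit in real vector spaces, over plots $p:U\to X$ with $U$ a connected open neighbourhood of $0$ in some $\mathbb{R}^n$ and $p(0)=x$ (morphisms: smooth $f:U\to U'$ with $f(0)=0$ and $q\circ f=p$), of $p\mapsto T_0(U)$, $f\mapsto f_*$. On $TX=\coprod_x T_x(X)$, Hector's diffeology is generated by the maps $Tf:TU\to TX$ for plots $f:U\to X$ with $U$ connected (sending $T_u(U)\cong T_0(U-u)$ to $T_{f(u)}(X)$ via the plot $w\mapsto f(w+u)$), and the dvs diffeology is the smallest diffeology containing Hector's for which fibrewise addition, scalar multiplication and the zero section $X\to TX$ are smooth. $T_x(X)$ is given the sub-diffeology of either; for a diffeological group (in particular a diffeological vector space) these two diffeologies on $T_x$ coincide, and $T_0(V)$ denotes $T_0(V)$ with this common diffeology. *)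

theory Defs
  imports "HOL-Analysis.Derivative"
begin

section \<open>Euclidean spaces R^n, encoded inside nat => real\<close>

type_synonym rn = "nat \<Rightarrow> real"

definition orig :: rn where "orig = (\<lambda>_. 0)"

definition Rn :: "nat \<Rightarrow> rn set" where
  "Rn n = {x. \<forall>i\<ge>n. x i = 0}"

definition open_Rn :: "nat \<Rightarrow> rn set \<Rightarrow> bool" where
  "open_Rn n U \<longleftrightarrow> U \<subseteq> Rn n \<and>
     (\<forall>x\<in>U. \<exists>e>0. \<forall>y\<in>Rn n. (\<forall>i<n. \<bar>y i - x i\<bar> < e) \<longrightarrow> y \<in> U)"

definition connected_Rn :: "nat \<Rightarrow> rn set \<Rightarrow> bool" where
  "connected_Rn n U \<longleftrightarrow> \<not> (\<exists>A B. open_Rn n A \<and> open_Rn n B \<and> A \<noteq> {} \<and> B \<noteq> {}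
       \<and> A \<inter> B = {} \<and> A \<union> B = U)"

definition cont_Rn :: "nat \<Rightarrow> rn set \<Rightarrow> (rn \<Rightarrow> real) \<Rightarrow> bool" where
  "cont_Rn n U g \<longleftrightarrow> (\<forall>x\<in>U. \<forall>e>0. \<exists>d>0. \<forall>y\<in>U.
      (\<forall>i<n. \<bar>y i - x i\<bar> < d) \<longrightarrow> \<bar>g y - g x\<bar> < e)"

definition pd :: "nat \<Rightarrow> (rn \<Rightarrow> real) \<Rightarrow> rn \<Rightarrow> real" where
  "pd i g x = deriv (\<lambda>t. g (x(i := x i + t))) 0"

primrec iter_pd :: "nat list \<Rightarrow> (rn \<Rightarrow> real) \<Rightarrow> rn \<Rightarrow> real" where
  "iter_pd [] g = g"
| "iter_pd (i # js) g = pd i (iter_pd js g)"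

definition smooth_real :: "nat \<Rightarrow> rn set \<Rightarrow> (rn \<Rightarrow> real) \<Rightarrow> bool" where
  "smooth_real n U g \<longleftrightarrow> (\<forall>js. set js \<subseteq> {..<n} \<longrightarrow>
      cont_Rn n U (iter_pd js g) \<and>
      (\<forall>i<n. \<forall>x\<in>U. \<exists>D. ((\<lambda>t. iter_pd js g (x(i := x i + t))) has_real_derivative D) (at 0)))"

definition smooth_map :: "nat \<Rightarrow> rn set \<Rightarrow> nat \<Rightarrow> rn set \<Rightarrow> (rn \<Rightarrow> rn) \<Rightarrow> bool" where
  "smooth_map n U m W f \<longleftrightarrow> (\<forall>u\<in>U. f u \<in> W) \<and> W \<subseteq> Rn m \<and>
      (\<forall>j<m. smooth_real n U (\<lambda>u. f u j))"

definition dmap :: "nat \<Rightarrow> (rn \<Rightarrow> rn) \<Rightarrow> rn \<Rightarrow> rn" where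
  "dmap n f v = (\<lambda>j. \<Sum>i<n. pd i (\<lambda>u. f u j) orig * v i)"

text \<open>A diffeology on carrier X: D n U p means p : U -> X is a plot, U open in R^n.
  Plots are regarded as functions on U (values outside U are irrelevant).\<close>
definition diffeology :: "'a set \<Rightarrow> (nat \<Rightarrow> rn set \<Rightarrow> (rn \<Rightarrow> 'a) \<Rightarrow> bool) \<Rightarrow> bool" where
  "diffeology X D \<longleftrightarrow>
     (\<forall>n U p. D n U p \<longrightarrow> open_Rn n U \<and> (\<forall>u\<in>U. p u \<in> X)) \<and>
     (\<forall>n U p q. D n U p \<and> (\<forall>u\<in>U. q u = p u) \<longrightarrow> D n U q) \<and>
     (\<forall>n U x. open_Rn n U \<and> x \<in> X \<longrightarrow> D n U (\<lambda>_. x)) \<and>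
     (\<forall>n U p m W f. D n U p \<and> open_Rn m W \<and> smooth_map m W n U f \<longrightarrow> D m W (p \<circ> f)) \<and>
     (\<forall>n U p. open_Rn n U \<and> (\<forall>u\<in>U. p u \<in> X) \<and>
        (\<forall>u\<in>U. \<exists>W. open_Rn n W \<and> u \<in> W \<and> W \<subseteq> U \<and> D n W p) \<longrightarrow> D n U p)"

text \<open>Diffeological vector space structure on a real vector space type (carrier UNIV):
  addition V x V -> V and scalar multiplication R x V -> V are smooth for the
  product diffeologies (plots of a product = pairs of plots; plots of R = smooth functions).\<close>
definition dvs_diffeology :: "(nat \<Rightarrow> rn set \<Rightarrow> (rn \<Rightarrow> 'v::real_vector) \<Rightarrow> bool) \<Rightarrow> bool" where
  "dvs_diffeology D \<longleftrightarrow> diffeology UNIV D \<and>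
     (\<forall>n U p q. D n U p \<and> D n U q \<longrightarrow> D n U (\<lambda>u. p u + q u)) \<and>
     (\<forall>n U r p. open_Rn n U \<and> smooth_real n U r \<and> D n U p \<longrightarrow> D n U (\<lambda>u. r u *\<^sub>R p u))"

definition fine_diffeology :: "(nat \<Rightarrow> rn set \<Rightarrow> (rn \<Rightarrow> 'v::real_vector) \<Rightarrow> bool) \<Rightarrow> bool" where
  "fine_diffeology D \<longleftrightarrow> dvs_diffeology D \<and>
     (\<forall>D'. dvs_diffeology D' \<longrightarrow> (\<forall>n U p. D n U p \<longrightarrow> D' n U p))"

section \<open>Internal tangent space as a colimit (standard construction)\<close>

text \<open>Objects of the indexing category: (n, U, p).\<close>
type_synonym 'a pidx = "nat \<times> rn set \<times> (rn \<Rightarrow> 'a)"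

definition centred :: "(nat \<Rightarrow> rn set \<Rightarrow> (rn \<Rightarrow> 'a) \<Rightarrow> bool) \<Rightarrow> 'a \<Rightarrow> 'a pidx \<Rightarrow> bool" where
  "centred D x c \<longleftrightarrow> (case c of (n, U, p) \<Rightarrow>
      D n U p \<and> connected_Rn n U \<and> orig \<in> U \<and> p orig = x)"

definition tmorph :: "(nat \<Rightarrow> rn set \<Rightarrow> (rn \<Rightarrow> 'a) \<Rightarrow> bool) \<Rightarrow> 'a \<Rightarrow> 'a pidx \<Rightarrow> 'a pidx
      \<Rightarrow> (rn \<Rightarrow> rn) \<Rightarrow> bool" where
  "tmorph D x c c' f \<longleftrightarrow> centred D x c \<and> centred D x c' \<and>
     (case c of (n, U, p) \<Rightarrow> case c' of (n', U', p') \<Rightarrow>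
        smooth_map n U n' U' f \<and> f orig = orig \<and> (\<forall>u\<in>U. p' (f u) = p u))"

text \<open>Direct sum of the T_0(U) = R^n over the objects.\<close>
definition DS :: "(nat \<Rightarrow> rn set \<Rightarrow> (rn \<Rightarrow> 'a) \<Rightarrow> bool) \<Rightarrow> 'a \<Rightarrow> ('a pidx \<Rightarrow> rn) set" where
  "DS D x = {s. finite {c. s c \<noteq> orig} \<and> (\<forall>c. s c \<noteq> orig \<longrightarrow> centred D x c)
               \<and> (\<forall>c. s c \<in> Rn (fst c))}"

definition ds_add :: "('a pidx \<Rightarrow> rn) \<Rightarrow> ('a pidx \<Rightarrow> rn) \<Rightarrow> ('a pidx \<Rightarrow> rn)" where
  "ds_add s t = (\<lambda>c i. s c i + t c i)"

definition ds_scale :: "real \<Rightarrow> ('a pidx \<Rightarrow> rn) \<Rightarrow> ('a pidx \<Rightarrow> rn)" where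
  "ds_scale r s = (\<lambda>c i. r * s c i)"

definition ds_sub :: "('a pidx \<Rightarrow> rn) \<Rightarrow> ('a pidx \<Rightarrow> rn) \<Rightarrow> ('a pidx \<Rightarrow> rn)" where
  "ds_sub s t = (\<lambda>c i. s c i - t c i)"

definition ds_zero :: "'a pidx \<Rightarrow> rn" where
  "ds_zero = (\<lambda>c. orig)"

definition delta :: "'a pidx \<Rightarrow> rn \<Rightarrow> ('a pidx \<Rightarrow> rn)" where
  "delta c v = (\<lambda>c'. if c' = c then v else orig)"

definition ds_subspace :: "('a pidx \<Rightarrow> rn) set \<Rightarrow> bool" where
  "ds_subspace S \<longleftrightarrow> ds_zero \<in> S \<and> (\<forall>s\<in>S. \<forall>t\<in>S. ds_add s t \<in> S) \<and>
     (\<forall>r. \<forall>s\<in>S. ds_scale r s \<in> S)"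

definition REL :: "(nat \<Rightarrow> rn set \<Rightarrow> (rn \<Rightarrow> 'a) \<Rightarrow> bool) \<Rightarrow> 'a \<Rightarrow> ('a pidx \<Rightarrow> rn) set" where
  "REL D x = \<Inter>{S. ds_subspace S \<and>
      {ds_sub (delta c v) (delta c' (dmap (fst c) f v)) | c c' f v.
          tmorph D x c c' f \<and> v \<in> Rn (fst c)} \<subseteq> S}"

definition tcls :: "(nat \<Rightarrow> rn set \<Rightarrow> (rn \<Rightarrow> 'a) \<Rightarrow> bool) \<Rightarrow> 'a \<Rightarrow> ('a pidx \<Rightarrow> rn)
     \<Rightarrow> ('a pidx \<Rightarrow> rn) set" where
  "tcls D x s = {t \<in> DS D x. ds_sub t s \<in> REL D x}"

definition Tsp :: "(nat \<Rightarrow> rn set \<Rightarrow> (rn \<Rightarrow> 'a) \<Rightarrow> bool) \<Rightarrow> 'a \<Rightarrow> ('a pidx \<Rightarrow> rn) set set" where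
  "Tsp D x = tcls D x ` DS D x"

definition T_add :: "(nat \<Rightarrow> rn set \<Rightarrow> (rn \<Rightarrow> 'a) \<Rightarrow> bool) \<Rightarrow> 'a \<Rightarrow> ('a pidx \<Rightarrow> rn) set
    \<Rightarrow> ('a pidx \<Rightarrow> rn) set \<Rightarrow> ('a pidx \<Rightarrow> rn) set" where
  "T_add D x A B = {t \<in> DS D x. \<exists>a\<in>A. \<exists>b\<in>B. ds_sub t (ds_add a b) \<in> REL D x}"

definition T_scale :: "(nat \<Rightarrow> rn set \<Rightarrow> (rn \<Rightarrow> 'a) \<Rightarrow> bool) \<Rightarrow> 'a \<Rightarrow> real
    \<Rightarrow> ('a pidx \<Rightarrow> rn) set \<Rightarrow> ('a pidx \<Rightarrow> rn) set" where
  "T_scale D x r A = {t \<in> DS D x. \<exists>a\<in>A. ds_sub t (ds_scale r a) \<in> REL D x}"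

definition tinj :: "(nat \<Rightarrow> rn set \<Rightarrow> (rn \<Rightarrow> 'a) \<Rightarrow> bool) \<Rightarrow> 'a \<Rightarrow> 'a pidx \<Rightarrow> rn
    \<Rightarrow> ('a pidx \<Rightarrow> rn) set" where
  "tinj D x c v = tcls D x (delta c v)"

definition TX :: "'a set \<Rightarrow> (nat \<Rightarrow> rn set \<Rightarrow> (rn \<Rightarrow> 'a) \<Rightarrow> bool) \<Rightarrow> ('a \<times> ('a pidx \<Rightarrow> rn) set) set" where
  "TX X D = {(x, A). x \<in> X \<and> A \<in> Tsp D x}"

text \<open>TU = U x R^n, encoded as an open subset of R^(2n): first n coordinates in U.\<close>
definition fstp :: "nat \<Rightarrow> rn \<Rightarrow> rn" where
  "fstp n w = (\<lambda>i. if i < n then w i else 0)"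

definition sndp :: "nat \<Rightarrow> rn \<Rightarrow> rn" where
  "sndp n w = (\<lambda>i. w (i + n))"

definition tanU :: "nat \<Rightarrow> rn set \<Rightarrow> rn set" where
  "tanU n U = {w \<in> Rn (2 * n). fstp n w \<in> U}"

text \<open>Tf : TU -> TX, sending T_u(U) = T_0(U - u) to T_{f u}(X) via the plot w |-> f (w + u).\<close>
definition Tmap :: "(nat \<Rightarrow> rn set \<Rightarrow> (rn \<Rightarrow> 'a) \<Rightarrow> bool) \<Rightarrow> nat \<Rightarrow> rn set \<Rightarrow> (rn \<Rightarrow> 'a)
     \<Rightarrow> rn \<Rightarrow> 'a \<times> ('a pidx \<Rightarrow> rn) set" where
  "Tmap D n U f w = (let u = fstp n w in
     (f u, tinj D (f u) (n, (\<lambda>y i. y i - u i) ` U, (\<lambda>y. f (\<lambda>i. y i + u i))) (sndp n w)))"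

definition hector :: "'a set \<Rightarrow> (nat \<Rightarrow> rn set \<Rightarrow> (rn \<Rightarrow> 'a) \<Rightarrow> bool)
     \<Rightarrow> nat \<Rightarrow> rn set \<Rightarrow> (rn \<Rightarrow> 'a \<times> ('a pidx \<Rightarrow> rn) set) \<Rightarrow> bool" where
  "hector X D m W q \<longleftrightarrow> (\<forall>D'. diffeology (TX X D) D' \<and>
      (\<forall>n U f. D n U f \<and> connected_Rn n U \<longrightarrow> D' (2 * n) (tanU n U) (Tmap D n U f))
      \<longrightarrow> D' m W q)"

definition T_diff :: "'a set \<Rightarrow> (nat \<Rightarrow> rn set \<Rightarrow> (rn \<Rightarrow> 'a) \<Rightarrow> bool) \<Rightarrow> 'a
     \<Rightarrow> nat \<Rightarrow> rn set \<Rightarrow> (rn \<Rightarrow> ('a pidx \<Rightarrow> rn) set) \<Rightarrow> bool" where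
  "T_diff X D x m W q \<longleftrightarrow> hector X D m W (\<lambda>w. (x, q w))"

end

theory Submission
  imports Defs
begin

(* On a fine vector space every plot is locally a finite linear combination
   u \<mapsto> \<Sum>k r_k(u) w_k with smooth real coefficients.  Such a plot p has a differential
   p_*(v) = \<Sum>k (Dr_k(0) v) w_k in V, independent of the representation and satisfying the
   chain rule, so summing differentials over the direct sum gives a linear map T_0(V) \<rightarrow> V
   that kills the relations.  It is onto via the linear plots y \<mapsto> \<Sum>k y_k w_k on R^K.  It
   is one-to-one because every element of T_0(V) is equivalent to a single vector on one
   linear plot, where a vector with zero image is killed by a linear projection.  The same
   local description gives smoothness both ways: Hector's generators are sent to linear
   combinations with smooth coefficients, and a plot \<Sum>k r_k w_k lifts to T_0(V) as the
   generator T(y \<mapsto> \<Sum>k y_k w_k) composed with u \<mapsto> (0, r(u)). *)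

section \<open>Calculus on the coordinate spaces\<close>

definition coord_box :: "nat \<Rightarrow> rn \<Rightarrow> real \<Rightarrow> rn set" where
  "coord_box n x e = {y. \<forall>i<n. \<bar>y i - x i\<bar> < e}"

definition nhds_Rn :: "nat \<Rightarrow> rn set \<Rightarrow> rn \<Rightarrow> rn filter" where
  "nhds_Rn n U x = inf (INF e\<in>{0<..}. principal (coord_box n x e)) (principal U)"

lemma eventually_nhds_Rn:
  "eventually P (nhds_Rn n U x) \<longleftrightarrow> (\<exists>e>0. \<forall>y\<in>U. (\<forall>i<n. \<bar>y i - x i\<bar> < e) \<longrightarrow> P y)"
proof -
  have "eventually (\<lambda>y. y \<in> U \<longrightarrow> P y) (INF e\<in>{0<..}. principal (coord_box n x e))
     \<longleftrightarrow> (\<exists>e\<in>{0<..}. eventually (\<lambda>y. y \<in> U \<longrightarrow> P y) (principal (coord_box n x e)))"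
  proof (rule eventually_INF_base)
    fix a b :: real assume "a \<in> {0<..}" "b \<in> {0<..}"
    thus "\<exists>c\<in>{0<..}. principal (coord_box n x c) \<le> inf (principal (coord_box n x a)) (principal (coord_box n x b))"
      by (intro bexI[of _ "min a b"]) (auto simp: coord_box_def)
  qed simp
  thus ?thesis unfolding nhds_Rn_def eventually_inf_principal
    by (simp add: eventually_principal coord_box_def) (metis greaterThan_iff)
qed

lemma cont_Rn_iff_tendsto: "cont_Rn n U g \<longleftrightarrow> (\<forall>x\<in>U. (g \<longlongrightarrow> g x) (nhds_Rn n U x))"
  unfolding cont_Rn_def tendsto_iff dist_real_def eventually_nhds_Rn by blast

lemma orig_Rn [simp]: "orig \<in> Rn n"
  by (simp add: Rn_def orig_def)

lemma fun_upd_Rn [simp]: "x \<in> Rn n \<Longrightarrow> i < n \<Longrightarrow> x(i := t) \<in> Rn n"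
  by (simp add: Rn_def)

lemma open_Rn_Rn [simp]: "open_Rn n (Rn n)"
  by (auto simp: open_Rn_def intro: exI[of _ 1])

lemma open_Rn_subset: "open_Rn n U \<Longrightarrow> U \<subseteq> Rn n"
  by (simp add: open_Rn_def)

lemma open_Rn_Int: "open_Rn n A \<Longrightarrow> open_Rn n B \<Longrightarrow> open_Rn n (A \<inter> B)"
  unfolding open_Rn_def
proof (intro conjI ballI)
  fix x assume A: "A \<subseteq> Rn n \<and> (\<forall>x\<in>A. \<exists>e>0. \<forall>y\<in>Rn n. (\<forall>i<n. \<bar>y i - x i\<bar> < e) \<longrightarrow> y \<in> A)"
    and B: "B \<subseteq> Rn n \<and> (\<forall>x\<in>B. \<exists>e>0. \<forall>y\<in>Rn n. (\<forall>i<n. \<bar>y i - x i\<bar> < e) \<longrightarrow> y \<in> B)"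
    and x: "x \<in> A \<inter> B"
  then obtain e1 e2 where "e1 > 0" "e2 > 0"
    "\<forall>y\<in>Rn n. (\<forall>i<n. \<bar>y i - x i\<bar> < e1) \<longrightarrow> y \<in> A"
    "\<forall>y\<in>Rn n. (\<forall>i<n. \<bar>y i - x i\<bar> < e2) \<longrightarrow> y \<in> B" by blast
  thus "\<exists>e>0. \<forall>y\<in>Rn n. (\<forall>i<n. \<bar>y i - x i\<bar> < e) \<longrightarrow> y \<in> A \<inter> B"
    by (intro exI[of _ "min e1 e2"]) auto
qed blast

abbreviation has_pd :: "nat \<Rightarrow> (rn \<Rightarrow> real) \<Rightarrow> rn \<Rightarrow> real \<Rightarrow> bool" where
  "has_pd i g x D \<equiv> ((\<lambda>t. g (x(i := x i + t))) has_real_derivative D) (at 0)"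

lemma pd_eqI: "has_pd i g x D \<Longrightarrow> pd i g x = D"
  unfolding pd_def by (rule DERIV_imp_deriv)

lemma eventually_fun_upd_in:
  assumes "open_Rn n U" "x \<in> U" "i < n"
  shows "eventually (\<lambda>t. x(i := x i + t) \<in> U) (nhds 0)"
proof -
  from assms obtain e where e: "e > 0" "\<forall>y\<in>Rn n. (\<forall>i<n. \<bar>y i - x i\<bar> < e) \<longrightarrow> y \<in> U"
    and UR: "U \<subseteq> Rn n" unfolding open_Rn_def by blast
  have "x \<in> Rn n" using UR assms by auto
  thus ?thesis unfolding eventually_nhds_metric
    using e assms(3) by (intro exI[of _ e]) (auto simp: dist_real_def)
qed

lemma has_pd_cong:
  assumes "open_Rn n U" "x \<in> U" "i < n" "\<forall>y\<in>U. F y = G y"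
  shows "has_pd i F x D \<longleftrightarrow> has_pd i G x D"
proof (rule DERIV_cong_ev)
  show "eventually (\<lambda>t. F (x(i := x i + t)) = G (x(i := x i + t))) (nhds 0)"
    using eventually_fun_upd_in[OF assms(1-3)] by eventually_elim (use assms(4) in auto)
qed auto

lemma pd_cong:
  assumes "open_Rn n U" "x \<in> U" "i < n" "\<forall>y\<in>U. F y = G y"
  shows "pd i F x = pd i G x"
  unfolding pd_def deriv_def using has_pd_cong[OF assms] by simp

lemma iter_pd_cong:
  assumes "open_Rn n U" "\<forall>y\<in>U. F y = G y" "set js \<subseteq> {..<n}"
  shows "\<forall>y\<in>U. iter_pd js F y = iter_pd js G y"
  using assms(3) by (induction js) (use assms pd_cong[OF assms(1)] in auto)

lemma iter_pd_append_single: "iter_pd (js @ [i]) F = iter_pd js (pd i F)"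
  by (induction js) auto

lemma pd_const [simp]: "pd i (\<lambda>_. c) x = 0"
  unfolding pd_def by simp

lemma has_pd_coord: "has_pd i (\<lambda>y. y j) x (if i = j then 1 else 0)"
  by (cases "i = j") (auto intro!: derivative_eq_intros)

lemma pd_coord: "pd i (\<lambda>y. y j) = (\<lambda>x. if i = j then 1 else 0)"
  using pd_eqI[OF has_pd_coord] by auto

lemma has_pd_sum:
  "finite S \<Longrightarrow> (\<And>k. k \<in> S \<Longrightarrow> has_pd i (f k) x (D k)) \<Longrightarrow> has_pd i (\<lambda>y. \<Sum>k\<in>S. f k y) x (\<Sum>k\<in>S. D k)"
  by (rule DERIV_sum) auto

lemma has_pd_mult_const: "has_pd i f x D \<Longrightarrow> has_pd i (\<lambda>y. f y * c) x (D * c)"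
  by (rule DERIV_cmult_right)

definition cont_pdiff :: "nat \<Rightarrow> rn set \<Rightarrow> (rn \<Rightarrow> real) \<Rightarrow> bool" where
  "cont_pdiff n U F \<longleftrightarrow> cont_Rn n U F \<and> (\<forall>i<n. \<forall>x\<in>U. \<exists>D. has_pd i F x D)"

definition smooth_upto :: "nat \<Rightarrow> nat \<Rightarrow> rn set \<Rightarrow> (rn \<Rightarrow> real) \<Rightarrow> bool" where
  "smooth_upto k n U F \<longleftrightarrow> (\<forall>js. set js \<subseteq> {..<n} \<and> length js \<le> k \<longrightarrow> cont_pdiff n U (iter_pd js F))"

lemma smooth_real_iff_smooth_upto: "smooth_real n U F \<longleftrightarrow> (\<forall>k. smooth_upto k n U F)"
  unfolding smooth_real_def smooth_upto_def cont_pdiff_def by (metis le_refl)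

lemma smooth_upto_0: "smooth_upto 0 n U F \<longleftrightarrow> cont_pdiff n U F"
  unfolding smooth_upto_def by auto

lemma smooth_upto_Suc:
  "smooth_upto (Suc k) n U F \<longleftrightarrow> cont_pdiff n U F \<and> (\<forall>i<n. smooth_upto k n U (pd i F))"
proof
  assume A: "smooth_upto (Suc k) n U F"
  show "cont_pdiff n U F \<and> (\<forall>i<n. smooth_upto k n U (pd i F))"
  proof (intro conjI allI impI)
    show "cont_pdiff n U F" using A[unfolded smooth_upto_def, rule_format, of "[]"] by simp
    fix i assume "i < n"
    thus "smooth_upto k n U (pd i F)"
      using A[unfolded smooth_upto_def, rule_format, of "_ @ [i]"]
      unfolding smooth_upto_def by (auto simp: iter_pd_append_single)
  qed
next
  assume A: "cont_pdiff n U F \<and> (\<forall>i<n. smooth_upto k n U (pd i F))"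
  show "smooth_upto (Suc k) n U F" unfolding smooth_upto_def
  proof (intro allI impI)
    fix js assume js: "set js \<subseteq> {..<n} \<and> length js \<le> Suc k"
    show "cont_pdiff n U (iter_pd js F)"
    proof (cases js rule: rev_cases)
      case Nil thus ?thesis using A by simp
    next
      case (snoc ys i)
      thus ?thesis using A js unfolding smooth_upto_def by (auto simp: iter_pd_append_single)
    qed
  qed
qed

lemma smooth_upto_Suc_imp: "smooth_upto (Suc k) n U F \<Longrightarrow> smooth_upto k n U F"
  unfolding smooth_upto_def by auto

lemma cont_pdiff_cong:
  assumes "open_Rn n U" "\<forall>y\<in>U. F y = G y" "cont_pdiff n U F"
  shows "cont_pdiff n U G"
  using assms has_pd_cong[OF assms(1) _ _ assms(2)] unfolding cont_pdiff_def cont_Rn_def by auto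

lemma smooth_upto_cong:
  assumes "open_Rn n U" "\<forall>y\<in>U. F y = G y" "smooth_upto k n U F"
  shows "smooth_upto k n U G"
  using assms iter_pd_cong[OF assms(1,2)] cont_pdiff_cong[OF assms(1)] unfolding smooth_upto_def by blast

lemma cont_pdiff_subset: "V \<subseteq> U \<Longrightarrow> cont_pdiff n U F \<Longrightarrow> cont_pdiff n V F"
  unfolding cont_pdiff_def cont_Rn_def by (meson subsetD)

lemma smooth_real_subset: "V \<subseteq> U \<Longrightarrow> smooth_real n U F \<Longrightarrow> smooth_real n V F"
  unfolding smooth_real_iff_smooth_upto smooth_upto_def using cont_pdiff_subset by blast

lemma cont_pdiff_add:
  assumes "cont_pdiff n U F" "cont_pdiff n U G" shows "cont_pdiff n U (\<lambda>y. F y + G y)"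
  unfolding cont_pdiff_def
proof (intro conjI allI impI ballI)
  show "cont_Rn n U (\<lambda>y. F y + G y)" using assms unfolding cont_pdiff_def cont_Rn_iff_tendsto
    by (auto intro!: tendsto_add)
  fix i x assume "i < n" "x \<in> U"
  then obtain D E where "has_pd i F x D" "has_pd i G x E" using assms unfolding cont_pdiff_def by meson
  from DERIV_add[OF this] show "\<exists>D. has_pd i (\<lambda>y. F y + G y) x D" by blast
qed

lemma cont_pdiff_mult:
  assumes "cont_pdiff n U F" "cont_pdiff n U G" shows "cont_pdiff n U (\<lambda>y. F y * G y)"
  unfolding cont_pdiff_def
proof (intro conjI allI impI ballI)
  show "cont_Rn n U (\<lambda>y. F y * G y)" using assms unfolding cont_pdiff_def cont_Rn_iff_tendsto
    by (auto intro!: tendsto_mult)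
  fix i x assume "i < n" "x \<in> U"
  then obtain D E where "has_pd i F x D" "has_pd i G x E" using assms unfolding cont_pdiff_def by meson
  from DERIV_mult[OF this] show "\<exists>D. has_pd i (\<lambda>y. F y * G y) x D" by blast
qed

lemma pd_add: "has_pd i F x D \<Longrightarrow> has_pd i G x E \<Longrightarrow> pd i (\<lambda>y. F y + G y) x = pd i F x + pd i G x"
proof -
  assume a: "has_pd i F x D" "has_pd i G x E"
  have "has_pd i (\<lambda>y. F y + G y) x (D + E)" using DERIV_add[OF a] by simp
  thus ?thesis using pd_eqI[OF a(1)] pd_eqI[OF a(2)] pd_eqI by simp
qed

lemma pd_mult:
  assumes "has_pd i F x D" "has_pd i G x E"
  shows "pd i (\<lambda>y. F y * G y) x = pd i F x * G x + F x * pd i G x"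
proof -
  have "has_pd i (\<lambda>y. F y * G y) x (D * G (x(i := x i + 0)) + E * F (x(i := x i + 0)))"
    using DERIV_mult[OF assms] by simp
  thus ?thesis using pd_eqI[OF assms(1)] pd_eqI[OF assms(2)] pd_eqI by (simp add: mult.commute)
qed

lemma smooth_upto_pdE:
  assumes "smooth_upto (Suc k) n U F" "i < n" "y \<in> U"
  obtains D where "has_pd i F y D"
proof -
  have "cont_pdiff n U F" using assms(1) smooth_upto_Suc by blast
  thus ?thesis using assms(2,3) that unfolding cont_pdiff_def by blast
qed

lemma smooth_upto_add:
  "smooth_upto k n U F \<Longrightarrow> smooth_upto k n U G \<Longrightarrow> open_Rn n U \<Longrightarrow> smooth_upto k n U (\<lambda>y. F y + G y)"
proof (induction k arbitrary: F G)
  case 0 thus ?case by (simp add: smooth_upto_0 cont_pdiff_add)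
next
  case (Suc k)
  show ?case unfolding smooth_upto_Suc
  proof (intro conjI allI impI)
    show "cont_pdiff n U (\<lambda>y. F y + G y)" using Suc.prems by (simp add: smooth_upto_Suc cont_pdiff_add)
    fix i assume i: "i < n"
    have "smooth_upto k n U (\<lambda>y. pd i F y + pd i G y)"
      using Suc.IH Suc.prems i by (simp add: smooth_upto_Suc)
    moreover have "\<forall>y\<in>U. pd i F y + pd i G y = pd i (\<lambda>y. F y + G y) y"
    proof
      fix y assume "y \<in> U"
      obtain D E where "has_pd i F y D" "has_pd i G y E"
        using smooth_upto_pdE[OF Suc.prems(1) i \<open>y \<in> U\<close>] smooth_upto_pdE[OF Suc.prems(2) i \<open>y \<in> U\<close>] .
      thus "pd i F y + pd i G y = pd i (\<lambda>y. F y + G y) y" by (simp add: pd_add)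
    qed
    ultimately show "smooth_upto k n U (pd i (\<lambda>y. F y + G y))"
      by (rule smooth_upto_cong[OF Suc.prems(3), rotated])
  qed
qed

lemma smooth_upto_mult:
  "smooth_upto k n U F \<Longrightarrow> smooth_upto k n U G \<Longrightarrow> open_Rn n U \<Longrightarrow> smooth_upto k n U (\<lambda>y. F y * G y)"
proof (induction k arbitrary: F G)
  case 0 thus ?case by (simp add: smooth_upto_0 cont_pdiff_mult)
next
  case (Suc k)
  show ?case unfolding smooth_upto_Suc
  proof (intro conjI allI impI)
    show "cont_pdiff n U (\<lambda>y. F y * G y)" using Suc.prems by (simp add: smooth_upto_Suc cont_pdiff_mult)
    fix i assume i: "i < n"
    have "smooth_upto k n U (\<lambda>y. pd i F y * G y + F y * pd i G y)"
      using Suc.IH Suc.prems i smooth_upto_Suc_imp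
      by (intro smooth_upto_add[OF _ _ Suc.prems(3)]) (auto simp: smooth_upto_Suc)
    moreover have "\<forall>y\<in>U. pd i F y * G y + F y * pd i G y = pd i (\<lambda>y. F y * G y) y"
    proof
      fix y assume "y \<in> U"
      obtain D E where "has_pd i F y D" "has_pd i G y E"
        using smooth_upto_pdE[OF Suc.prems(1) i \<open>y \<in> U\<close>] smooth_upto_pdE[OF Suc.prems(2) i \<open>y \<in> U\<close>] .
      thus "pd i F y * G y + F y * pd i G y = pd i (\<lambda>y. F y * G y) y" by (simp add: pd_mult)
    qed
    ultimately show "smooth_upto k n U (pd i (\<lambda>y. F y * G y))"
      by (rule smooth_upto_cong[OF Suc.prems(3), rotated])
  qed
qed

lemma smooth_upto_const: "smooth_upto k n U (\<lambda>_. c)"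
proof (induction k arbitrary: c)
  case 0 thus ?case by (auto simp: smooth_upto_0 cont_pdiff_def cont_Rn_def intro!: exI[of _ 0])
next
  case (Suc k)
  have "pd i (\<lambda>_. c) = (\<lambda>_. 0)" for i by (rule ext) simp
  thus ?case using Suc by (auto simp: smooth_upto_Suc cont_pdiff_def cont_Rn_def intro!: exI[of _ 0])
qed

lemma smooth_const [simp]: "smooth_real n U (\<lambda>_. c)"
  by (simp add: smooth_real_iff_smooth_upto smooth_upto_const)

lemma cont_Rn_coord:
  assumes "open_Rn n U" shows "cont_Rn n U (\<lambda>y. y j)"
  unfolding cont_Rn_def
proof (intro ballI allI impI)
  fix x and e :: real assume x: "x \<in> U" and e: "e > 0"
  show "\<exists>d>0. \<forall>y\<in>U. (\<forall>i<n. \<bar>y i - x i\<bar> < d) \<longrightarrow> \<bar>y j - x j\<bar> < e"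
  proof (cases "j < n")
    case True thus ?thesis using e by auto
  next
    case False
    hence z: "\<forall>y\<in>U. y j = 0" using open_Rn_subset[OF assms] by (auto simp: Rn_def)
    show ?thesis
    proof (intro exI[of _ 1] conjI ballI impI)
      fix y assume "y \<in> U"
      hence "y j = 0" "x j = 0" using z x by auto
      thus "\<bar>y j - x j\<bar> < e" using e by simp
    qed simp
  qed
qed

lemma smooth_upto_coord:
  assumes "open_Rn n U" shows "smooth_upto k n U (\<lambda>y. y j)"
proof -
  have "cont_pdiff n U (\<lambda>y. y j)"
    unfolding cont_pdiff_def using cont_Rn_coord[OF assms] has_pd_coord by blast
  thus ?thesis
    by (cases k) (simp_all add: smooth_upto_0 smooth_upto_Suc pd_coord smooth_upto_const)
qed

lemma smooth_coord: "open_Rn n U \<Longrightarrow> smooth_real n U (\<lambda>y. y j)"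
  by (simp add: smooth_real_iff_smooth_upto smooth_upto_coord)

lemma smooth_add:
  "smooth_real n U F \<Longrightarrow> smooth_real n U G \<Longrightarrow> open_Rn n U \<Longrightarrow> smooth_real n U (\<lambda>y. F y + G y)"
  by (simp add: smooth_real_iff_smooth_upto smooth_upto_add)

lemma smooth_mult:
  "smooth_real n U F \<Longrightarrow> smooth_real n U G \<Longrightarrow> open_Rn n U \<Longrightarrow> smooth_real n U (\<lambda>y. F y * G y)"
  by (simp add: smooth_real_iff_smooth_upto smooth_upto_mult)

lemma smooth_sum:
  "finite S \<Longrightarrow> (\<And>k. k \<in> S \<Longrightarrow> smooth_real n U (f k)) \<Longrightarrow> open_Rn n U \<Longrightarrow>
    smooth_real n U (\<lambda>y. \<Sum>k\<in>S. f k y)"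
  by (induction S rule: finite_induct) (auto intro: smooth_add)

lemma smooth_diff:
  assumes "smooth_real n U F" "smooth_real n U G" "open_Rn n U"
  shows "smooth_real n U (\<lambda>y. F y - G y)"
  using smooth_add[OF assms(1) smooth_mult[OF smooth_const assms(2,3)] assms(3), of "-1"] by simp

lemma smooth_pd: "smooth_real n U F \<Longrightarrow> i < n \<Longrightarrow> smooth_real n U (pd i F)"
  unfolding smooth_real_iff_smooth_upto using smooth_upto_Suc by blast

lemma smooth_cont_pdiff: "smooth_real n U F \<Longrightarrow> cont_pdiff n U F"
  unfolding smooth_real_iff_smooth_upto using smooth_upto_0 by blast

lemma smooth_has_pd: "smooth_real n U F \<Longrightarrow> i < n \<Longrightarrow> x \<in> U \<Longrightarrow> has_pd i F x (pd i F x)"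
  using smooth_cont_pdiff[unfolded cont_pdiff_def] pd_eqI by blast

lemma smooth_cont: "smooth_real n U F \<Longrightarrow> cont_Rn n U F"
  using smooth_cont_pdiff[unfolded cont_pdiff_def] by blast

lemma smooth_lincomb_coords: "open_Rn n W \<Longrightarrow> smooth_real n W (\<lambda>y. \<Sum>m<K. c m * y m)"
  by (rule smooth_sum) (auto intro: smooth_mult smooth_coord)

lemma sum_indicator_mult:
  "(\<Sum>m<K. (if m = i then 1 else 0) * c m) = (if i < K then c i else (0::real))"
  "(\<Sum>m<K. (if i = m then 1 else 0) * c m) = (if i < K then c i else (0::real))"
  for K :: nat
proof -
  have "(\<Sum>m<K. (if m = i then 1 else 0) * c m) = (\<Sum>m<K. if m = i then c m else 0)"
    "(\<Sum>m<K. (if i = m then 1 else 0) * c m) = (\<Sum>m<K. if i = m then c m else 0)"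
    by (rule sum.cong; simp)+
  thus "(\<Sum>m<K. (if m = i then 1 else 0) * c m) = (if i < K then c i else 0)"
    "(\<Sum>m<K. (if i = m then 1 else 0) * c m) = (if i < K then c i else 0)"
    by simp_all
qed

lemma pd_lincomb_coords: "pd i (\<lambda>y. \<Sum>m<K. c m * y m) x = (if i < K then c i else 0)"
proof -
  have "has_pd i (\<lambda>y. \<Sum>m\<in>{..<K}. y m * c m) x (\<Sum>m\<in>{..<K}. (if i = m then 1 else 0) * c m)"
    by (intro has_pd_sum has_pd_mult_const[OF has_pd_coord]) simp
  hence "has_pd i (\<lambda>y. \<Sum>m<K. c m * y m) x (if i < K then c i else 0)"
    unfolding sum_indicator_mult by (simp add: mult.commute)
  thus ?thesis by (rule pd_eqI)
qed

lemma mvt_symmetric: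
  fixes f :: "real \<Rightarrow> real"
  assumes "\<And>s. \<bar>s\<bar> \<le> \<bar>d\<bar> \<Longrightarrow> (f has_real_derivative f' s) (at s)"
  shows "\<exists>\<xi>. \<bar>\<xi>\<bar> \<le> \<bar>d\<bar> \<and> f d - f 0 = d * f' \<xi>"
proof (cases d "0::real" rule: linorder_cases)
  case less
  have "\<exists>z>d. z < 0 \<and> f 0 - f d = (0 - d) * f' z"
    by (rule MVT2) (use less assms in auto)
  then obtain z where "z > d" "z < 0" "f 0 - f d = (0 - d) * f' z" by blast
  thus ?thesis using less by (intro exI[of _ z]) (auto simp: algebra_simps)
next
  case greater
  have "\<exists>z>0. z < d \<and> f d - f 0 = (d - 0) * f' z"
    by (rule MVT2) (use greater assms in auto)
  then obtain z where "z > 0" "z < d" "f d - f 0 = (d - 0) * f' z" by blast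
  thus ?thesis using greater by (intro exI[of _ z]) auto
qed simp

lemma has_pd_shift:
  assumes "has_pd k h (q(k := c + s0)) D"
  shows "((\<lambda>s. h (q(k := c + s))) has_real_derivative D) (at s0)"
proof -
  have "((\<lambda>t. h (q(k := c + (t + s0)))) has_real_derivative D) (at 0)"
    using assms by (simp add: add.commute add.left_commute)
  hence "((\<lambda>s. h (q(k := c + s))) has_real_derivative D) (at (0 + s0))"
    by (subst DERIV_shift)
  thus ?thesis by simp
qed

lemma mvt_along_coordinate:
  fixes h :: "rn \<Rightarrow> real"
  assumes "\<And>s. \<bar>s\<bar> \<le> \<bar>d\<bar> \<Longrightarrow> has_pd k h (z(k := c + s)) (pd k h (z(k := c + s)))"
  shows "\<exists>\<xi>. \<bar>\<xi>\<bar> \<le> \<bar>d\<bar> \<and> h (z(k := c + d)) - h (z(k := c)) = d * pd k h (z(k := c + \<xi>))"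
  using mvt_symmetric[of d "\<lambda>s. h (z(k := c + s))" "\<lambda>s. pd k h (z(k := c + s))"] has_pd_shift assms
  by simp

text \<open>Mean value theorem along the staircase from \<open>y0\<close> to \<open>y\<close> that changes one coordinate
  at a time; \<open>w k\<close> is the intermediate point on the \<open>k\<close>-th step.\<close>

lemma mvt_staircase:
  fixes h :: "rn \<Rightarrow> real"
  assumes cube: "\<forall>x\<in>Rn n. (\<forall>i<n. \<bar>x i - y0 i\<bar> < e) \<longrightarrow> x \<in> U"
    and hU: "\<forall>x\<in>U. \<forall>j<n. has_pd j h x (pd j h x)"
    and y0: "y0 \<in> Rn n" and y: "y \<in> Rn n" "\<forall>i<n. \<bar>y i - y0 i\<bar> < e"
  obtains w where "\<forall>k<n. w k \<in> U \<and> (\<forall>i<n. \<bar>w k i - y0 i\<bar> \<le> \<bar>y i - y0 i\<bar>)"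
    and "h y - h y0 = (\<Sum>k<n. (y k - y0 k) * pd k h (w k))"
proof -
  define z where "z k = (\<lambda>i. if i < k then y i else y0 i)" for k
  have zU: "(z k)(k := y0 k + s) \<in> U" if "k < n" "\<bar>s\<bar> \<le> \<bar>y k - y0 k\<bar>" for k s
  proof -
    have "(z k)(k := y0 k + s) \<in> Rn n" using y0 y that unfolding Rn_def z_def by auto
    moreover have "\<forall>i<n. \<bar>((z k)(k := y0 k + s)) i - y0 i\<bar> < e"
      using y that unfolding z_def by auto
    ultimately show ?thesis using cube by blast
  qed
  define P where "P k \<xi> \<longleftrightarrow> \<bar>\<xi>\<bar> \<le> \<bar>y k - y0 k\<bar> \<and>
      h (z (Suc k)) - h (z k) = (y k - y0 k) * pd k h ((z k)(k := y0 k + \<xi>))" for k \<xi>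
  have "\<exists>\<xi>. P k \<xi>" if k: "k < n" for k
  proof -
    have "z (Suc k) = (z k)(k := y0 k + (y k - y0 k))" "z k = (z k)(k := y0 k)"
      unfolding z_def by (auto simp: fun_eq_iff)
    moreover have "has_pd k h ((z k)(k := y0 k + s)) (pd k h ((z k)(k := y0 k + s)))"
      if "\<bar>s\<bar> \<le> \<bar>y k - y0 k\<bar>" for s
      using hU zU[OF k that] k by blast
    ultimately show ?thesis
      using mvt_along_coordinate[where d = "y k - y0 k" and z = "z k" and c = "y0 k" and k = k]
      unfolding P_def by simp
  qed
  then obtain \<xi> where \<xi>: "\<And>k. k < n \<Longrightarrow> P k (\<xi> k)" by metis
  show ?thesis
  proof (rule that)
    show "\<forall>k<n. (z k)(k := y0 k + \<xi> k) \<in> U \<and>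
        (\<forall>i<n. \<bar>((z k)(k := y0 k + \<xi> k)) i - y0 i\<bar> \<le> \<bar>y i - y0 i\<bar>)"
      using \<xi> zU unfolding P_def z_def by simp
    have "z n = y" using y(1) y0 unfolding z_def Rn_def by (auto simp: fun_eq_iff)
    moreover have "z 0 = y0" unfolding z_def by auto
    ultimately have "h y - h y0 = (\<Sum>k<n. h (z (Suc k)) - h (z k))"
      using sum_lessThan_telescope[of "\<lambda>k. h (z k)" n] by simp
    also have "\<dots> = (\<Sum>k<n. (y k - y0 k) * pd k h ((z k)(k := y0 k + \<xi> k)))"
      using \<xi> unfolding P_def by simp
    finally show "h y - h y0 = (\<Sum>k<n. (y k - y0 k) * pd k h ((z k)(k := y0 k + \<xi> k)))" .
  qed
qed

lemma eventually_staircase_points: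
  fixes h :: "rn \<Rightarrow> real"
  assumes U: "open_Rn n U" and y0: "y0 \<in> U" and hU: "\<forall>x\<in>U. \<forall>j<n. has_pd j h x (pd j h x)"
    and near: "\<And>r. r > 0 \<Longrightarrow> eventually (\<lambda>t. \<forall>i<n. \<bar>\<gamma> t i - y0 i\<bar> < r) F"
    and \<gamma>Rn: "eventually (\<lambda>t. \<gamma> t \<in> Rn n) F"
  obtains w where "eventually (\<lambda>t. (\<forall>k<n. w t k \<in> U \<and> (\<forall>i<n. \<bar>w t k i - y0 i\<bar> \<le> \<bar>\<gamma> t i - y0 i\<bar>)) \<and>
      h (\<gamma> t) - h y0 = (\<Sum>k<n. (\<gamma> t k - y0 k) * pd k h (w t k))) F"
proof -
  obtain e where e: "e > 0" "\<forall>y\<in>Rn n. (\<forall>i<n. \<bar>y i - y0 i\<bar> < e) \<longrightarrow> y \<in> U"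
    using U y0 unfolding open_Rn_def by blast
  define W where "W t w \<longleftrightarrow> (\<forall>k<n. w k \<in> U \<and> (\<forall>i<n. \<bar>w k i - y0 i\<bar> \<le> \<bar>\<gamma> t i - y0 i\<bar>)) \<and>
      h (\<gamma> t) - h y0 = (\<Sum>k<n. (\<gamma> t k - y0 k) * pd k h (w k))" for t w
  have "eventually (\<lambda>t. W t (SOME w. W t w)) F"
    using near[OF e(1)] \<gamma>Rn
  proof eventually_elim
    case (elim t)
    then obtain v where "\<forall>k<n. v k \<in> U \<and> (\<forall>i<n. \<bar>v k i - y0 i\<bar> \<le> \<bar>\<gamma> t i - y0 i\<bar>)"
      and "h (\<gamma> t) - h y0 = (\<Sum>k<n. (\<gamma> t k - y0 k) * pd k h (v k))"
      using mvt_staircase[OF e(2) hU _ elim(2,1)] y0 open_Rn_subset[OF U] by blast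
    hence "W t v" unfolding W_def by blast
    thus ?case by (rule someI[where P = "W t"])
  qed
  from this[unfolded W_def] show ?thesis by (rule that)
qed

lemma filterlim_nhds_RnI:
  assumes "eventually (\<lambda>t. w t \<in> U) F" "\<And>r. r > 0 \<Longrightarrow> eventually (\<lambda>t. \<forall>i<n. \<bar>w t i - x i\<bar> < r) F"
  shows "filterlim w (nhds_Rn n U x) F"
  unfolding filterlim_iff
proof (intro allI impI)
  fix Q assume "eventually Q (nhds_Rn n U x)"
  then obtain r where r: "r > 0" "\<forall>y\<in>U. (\<forall>i<n. \<bar>y i - x i\<bar> < r) \<longrightarrow> Q y"
    unfolding eventually_nhds_Rn by blast
  show "eventually (\<lambda>t. Q (w t)) F" using assms(1) assms(2)[OF r(1)] by eventually_elim (use r(2) in blast)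
qed

lemma has_real_derivative_comp_curve:
  fixes h :: "rn \<Rightarrow> real" and \<gamma> :: "real \<Rightarrow> rn"
  assumes U: "open_Rn n U" and \<gamma>0: "\<gamma> 0 \<in> U"
    and hU: "\<forall>y\<in>U. \<forall>j<n. has_pd j h y (pd j h y)"
    and cont: "\<forall>j<n. cont_Rn n U (pd j h)"
    and \<gamma>': "\<forall>j<n. ((\<lambda>t. \<gamma> t j) has_real_derivative g' j) (at 0)"
    and \<gamma>Rn: "eventually (\<lambda>t. \<gamma> t \<in> Rn n) (at 0)"
  shows "((\<lambda>t. h (\<gamma> t)) has_real_derivative (\<Sum>j<n. pd j h (\<gamma> 0) * g' j)) (at 0)"
proof -
  define y0 where "y0 = \<gamma> 0"
  have near: "eventually (\<lambda>t. \<forall>j<n. \<bar>\<gamma> t j - y0 j\<bar> < r) (at 0)" if "r > 0" for r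
  proof -
    have "((\<lambda>t. \<gamma> t j) \<longlongrightarrow> y0 j) (at 0)" if "j < n" for j
      using DERIV_isCont[of "\<lambda>t. \<gamma> t j"] \<gamma>' that unfolding isCont_def y0_def by blast
    hence "eventually (\<lambda>t. \<forall>j\<in>{..<n}. \<bar>\<gamma> t j - y0 j\<bar> < r) (at 0)"
      using \<open>r > 0\<close> by (intro eventually_ball_finite) (auto simp: tendsto_iff dist_real_def)
    thus ?thesis by eventually_elim auto
  qed
  obtain w where w: "eventually (\<lambda>t. (\<forall>k<n. w t k \<in> U \<and> (\<forall>i<n. \<bar>w t k i - y0 i\<bar> \<le> \<bar>\<gamma> t i - y0 i\<bar>)) \<and>
      h (\<gamma> t) - h y0 = (\<Sum>k<n. (\<gamma> t k - y0 k) * pd k h (w t k))) (at 0)"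
    using eventually_staircase_points[OF U \<gamma>0[folded y0_def] hU near \<gamma>Rn] by blast
  have lim_pd: "((\<lambda>t. pd k h (w t k)) \<longlongrightarrow> pd k h y0) (at 0)" if k: "k < n" for k
  proof -
    have "filterlim (\<lambda>t. w t k) (nhds_Rn n U y0) (at 0)"
    proof (rule filterlim_nhds_RnI)
      show "eventually (\<lambda>t. w t k \<in> U) (at 0)" using w by eventually_elim (use k in blast)
      show "eventually (\<lambda>t. \<forall>i<n. \<bar>w t k i - y0 i\<bar> < r) (at 0)" if "r > 0" for r
        using w near[OF that] by eventually_elim (use k in \<open>meson order_le_less_trans\<close>)
    qed
    moreover have "(pd k h \<longlongrightarrow> pd k h y0) (nhds_Rn n U y0)"
      using cont k \<gamma>0 unfolding cont_Rn_iff_tendsto y0_def by auto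
    ultimately show ?thesis using filterlim_compose by blast
  qed
  have lim_quot: "((\<lambda>t. (\<gamma> t k - y0 k) / t) \<longlongrightarrow> g' k) (at 0)" if "k < n" for k
    using \<gamma>' that unfolding has_field_derivative_iff y0_def by simp
  have lim: "((\<lambda>t. \<Sum>k<n. pd k h (w t k) * ((\<gamma> t k - y0 k) / t)) \<longlongrightarrow> (\<Sum>k<n. pd k h y0 * g' k)) (at 0)"
    by (intro tendsto_sum tendsto_mult lim_pd lim_quot) auto
  have ev: "eventually (\<lambda>t. (\<Sum>k<n. pd k h (w t k) * ((\<gamma> t k - y0 k) / t)) =
      (h (\<gamma> t) - h (\<gamma> 0)) / (t - 0)) (at 0)"
    using w by eventually_elim (simp add: y0_def sum_divide_distrib mult.commute)
  show ?thesis unfolding has_field_derivative_iff using tendsto_cong[OF ev] lim y0_def by simp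
qed

lemma smooth_map_smooth_coord: "smooth_map m W n U g \<Longrightarrow> j < n \<Longrightarrow> smooth_real m W (\<lambda>u. g u j)"
  unfolding smooth_map_def by blast

lemma smooth_mapI:
  "(\<And>u. u \<in> W \<Longrightarrow> g u \<in> V) \<Longrightarrow> V \<subseteq> Rn k \<Longrightarrow> (\<And>j. j < k \<Longrightarrow> smooth_real m W (\<lambda>u. g u j))
   \<Longrightarrow> smooth_map m W k V g"
  unfolding smooth_map_def by blast

lemma has_pd_comp:
  assumes W: "open_Rn m W" and U: "open_Rn n U" and h: "smooth_real n U h"
    and g: "smooth_map m W n U g" and x: "x \<in> W" and i: "i < m"
  shows "has_pd i (\<lambda>y. h (g y)) x (\<Sum>j<n. pd j h (g x) * pd i (\<lambda>u. g u j) x)"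
proof -
  have gW: "\<forall>u\<in>W. g u \<in> U" using g unfolding smooth_map_def by blast
  have "((\<lambda>t. h (g (x(i := x i + t)))) has_real_derivative
        (\<Sum>j<n. pd j h (g (x(i := x i + 0))) * pd i (\<lambda>u. g u j) x)) (at 0)"
  proof (rule has_real_derivative_comp_curve[OF U])
    show "g (x(i := x i + 0)) \<in> U" using gW x by simp
    show "\<forall>y\<in>U. \<forall>j<n. has_pd j h y (pd j h y)" using smooth_has_pd[OF h] by blast
    show "\<forall>j<n. cont_Rn n U (pd j h)" using smooth_cont smooth_pd[OF h] by blast
    show "\<forall>j<n. ((\<lambda>t. g (x(i := x i + t)) j) has_real_derivative pd i (\<lambda>u. g u j) x) (at 0)"
      using smooth_has_pd[OF smooth_map_smooth_coord[OF g] i x] by blast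
    have "eventually (\<lambda>t. x(i := x i + t) \<in> W) (at 0)"
      using eventually_fun_upd_in[OF W x i] unfolding eventually_at_filter by eventually_elim auto
    thus "eventually (\<lambda>t. g (x(i := x i + t)) \<in> Rn n) (at 0)"
      by eventually_elim (use gW open_Rn_subset[OF U] in blast)
  qed
  thus ?thesis by simp
qed

lemma filterlim_smooth_map:
  assumes g: "smooth_map m W n U g" and x: "x \<in> W"
  shows "filterlim g (nhds_Rn n U (g x)) (nhds_Rn m W x)"
  unfolding filterlim_iff
proof (intro allI impI)
  fix Q assume "eventually Q (nhds_Rn n U (g x))"
  then obtain r where r: "r > 0" "\<forall>y\<in>U. (\<forall>i<n. \<bar>y i - g x i\<bar> < r) \<longrightarrow> Q y"
    unfolding eventually_nhds_Rn by blast
  have "eventually (\<lambda>y. \<bar>g y j - g x j\<bar> < r) (nhds_Rn m W x)" if "j < n" for j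
  proof -
    have "cont_Rn m W (\<lambda>u. g u j)" using smooth_cont smooth_map_smooth_coord[OF g that] by auto
    hence "((\<lambda>u. g u j) \<longlongrightarrow> g x j) (nhds_Rn m W x)" using x unfolding cont_Rn_iff_tendsto by blast
    thus ?thesis using r(1) unfolding tendsto_iff dist_real_def by blast
  qed
  hence "eventually (\<lambda>y. \<forall>j\<in>{..<n}. \<bar>g y j - g x j\<bar> < r) (nhds_Rn m W x)"
    by (intro eventually_ball_finite) auto
  moreover have "eventually (\<lambda>y. y \<in> W) (nhds_Rn m W x)"
    unfolding eventually_nhds_Rn by (auto intro: exI[of _ 1])
  ultimately show "eventually (\<lambda>y. Q (g y)) (nhds_Rn m W x)"
    by eventually_elim (use r g in \<open>auto simp: smooth_map_def\<close>)
qed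

lemma cont_pdiff_comp:
  assumes W: "open_Rn m W" and U: "open_Rn n U" and h: "smooth_real n U h"
    and g: "smooth_map m W n U g"
  shows "cont_pdiff m W (\<lambda>y. h (g y))"
  unfolding cont_pdiff_def
proof (intro conjI allI impI ballI)
  fix i x assume "i < m" "x \<in> W"
  thus "\<exists>D. has_pd i (\<lambda>y. h (g y)) x D" using has_pd_comp[OF W U h g] by blast
next
  show "cont_Rn m W (\<lambda>y. h (g y))" unfolding cont_Rn_iff_tendsto
  proof
    fix x assume x: "x \<in> W"
    have "(h \<longlongrightarrow> h (g x)) (nhds_Rn n U (g x))"
      using smooth_cont[OF h] g x unfolding cont_Rn_iff_tendsto smooth_map_def by blast
    from filterlim_compose[OF this filterlim_smooth_map[OF g x]]
    show "((\<lambda>y. h (g y)) \<longlongrightarrow> h (g x)) (nhds_Rn m W x)" .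
  qed
qed

lemma smooth_upto_sum:
  "finite S \<Longrightarrow> (\<And>k. k \<in> S \<Longrightarrow> smooth_upto q n U (f k)) \<Longrightarrow> open_Rn n U \<Longrightarrow>
    smooth_upto q n U (\<lambda>y. \<Sum>k\<in>S. f k y)"
  by (induction S rule: finite_induct) (auto intro: smooth_upto_add simp: smooth_upto_const)

lemma smooth_upto_comp:
  assumes W: "open_Rn m W" and U: "open_Rn n U" and g: "smooth_map m W n U g"
  shows "smooth_real n U h \<Longrightarrow> smooth_upto k m W (\<lambda>y. h (g y))"
proof (induction k arbitrary: h)
  case 0 thus ?case using cont_pdiff_comp[OF W U _ g] by (simp add: smooth_upto_0)
next
  case (Suc k)
  show ?case unfolding smooth_upto_Suc
  proof (intro conjI allI impI)
    show "cont_pdiff m W (\<lambda>y. h (g y))" using cont_pdiff_comp[OF W U Suc.prems g] .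
    fix i assume i: "i < m"
    have "smooth_upto k m W (\<lambda>y. \<Sum>j<n. pd j h (g y) * pd i (\<lambda>u. g u j) y)"
    proof (rule smooth_upto_sum[OF _ _ W])
      fix j assume "j \<in> {..<n}"
      hence j: "j < n" by simp
      have "smooth_upto k m W (\<lambda>y. pd j h (g y))" using Suc.IH smooth_pd[OF Suc.prems j] by blast
      moreover have "smooth_upto k m W (pd i (\<lambda>u. g u j))"
        using smooth_pd[OF smooth_map_smooth_coord[OF g j] i]
        unfolding smooth_real_iff_smooth_upto by blast
      ultimately show "smooth_upto k m W (\<lambda>y. pd j h (g y) * pd i (\<lambda>u. g u j) y)"
        using smooth_upto_mult[OF _ _ W] by blast
    qed simp
    moreover have "\<forall>y\<in>W. (\<Sum>j<n. pd j h (g y) * pd i (\<lambda>u. g u j) y) = pd i (\<lambda>y. h (g y)) y"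
      using pd_eqI[OF has_pd_comp[OF W U Suc.prems g _ i]] by simp
    ultimately show "smooth_upto k m W (pd i (\<lambda>y. h (g y)))"
      by (rule smooth_upto_cong[OF W, rotated])
  qed
qed

lemma smooth_comp:
  assumes "open_Rn m W" "open_Rn n U" "smooth_map m W n U g" "smooth_real n U h"
  shows "smooth_real m W (\<lambda>y. h (g y))"
  using smooth_upto_comp[OF assms] unfolding smooth_real_iff_smooth_upto by blast

lemma open_Rn_vimage:
  assumes W: "open_Rn m W" and N: "open_Rn n N" and g: "smooth_map m W n U g"
  shows "open_Rn m {u\<in>W. g u \<in> N}"
  unfolding open_Rn_def
proof (intro conjI ballI)
  show "{u \<in> W. g u \<in> N} \<subseteq> Rn m" using open_Rn_subset[OF W] by auto
  fix x assume x: "x \<in> {u \<in> W. g u \<in> N}"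
  obtain e where e: "e > 0" "\<forall>y\<in>Rn n. (\<forall>i<n. \<bar>y i - g x i\<bar> < e) \<longrightarrow> y \<in> N"
    using N x unfolding open_Rn_def by blast
  have "eventually (\<lambda>y. y \<in> N) (nhds_Rn n U (g x))"
    unfolding eventually_nhds_Rn using e g unfolding smooth_map_def by blast
  hence "eventually (\<lambda>y. g y \<in> N) (nhds_Rn m W x)"
    using filterlim_smooth_map[OF g] x unfolding filterlim_iff by blast
  then obtain d where d: "d > 0" "\<forall>y\<in>W. (\<forall>i<m. \<bar>y i - x i\<bar> < d) \<longrightarrow> g y \<in> N"
    unfolding eventually_nhds_Rn by blast
  obtain d2 where d2: "d2 > 0" "\<forall>y\<in>Rn m. (\<forall>i<m. \<bar>y i - x i\<bar> < d2) \<longrightarrow> y \<in> W"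
    using W x unfolding open_Rn_def by blast
  show "\<exists>e>0. \<forall>y\<in>Rn m. (\<forall>i<m. \<bar>y i - x i\<bar> < e) \<longrightarrow> y \<in> {u \<in> W. g u \<in> N}"
    using d d2 by (intro exI[of _ "min d d2"]) auto
qed

lemma smooth_map_restrict:
  assumes "smooth_map m W n U f" "W' \<subseteq> W" "\<forall>u\<in>W'. f u \<in> N" "N \<subseteq> U"
  shows "smooth_map m W' n N f"
  using assms smooth_real_subset unfolding smooth_map_def by blast

lemma smooth_map_id: "open_Rn n U \<Longrightarrow> V \<subseteq> U \<Longrightarrow> smooth_map n V n U (\<lambda>y. y)"
  by (rule smooth_mapI) (auto intro: smooth_coord smooth_real_subset dest: open_Rn_subset)

section \<open>Connectedness, cubes and translations\<close>

definition convex_Rn :: "nat \<Rightarrow> rn set \<Rightarrow> bool" where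
  "convex_Rn n S \<longleftrightarrow> S \<subseteq> Rn n \<and>
     (\<forall>a\<in>S. \<forall>b\<in>S. \<forall>t::real. 0 \<le> t \<and> t \<le> 1 \<longrightarrow> (\<lambda>i. a i + t * (b i - a i)) \<in> S)"

lemma open_segment_vimage:
  assumes A: "open_Rn n A" and a: "a \<in> Rn n" and b: "b \<in> Rn n"
  shows "open {t::real. (\<lambda>i. a i + t * (b i - a i)) \<in> A}"
  unfolding open_dist
proof (intro ballI)
  fix t assume "t \<in> {t. (\<lambda>i. a i + t * (b i - a i)) \<in> A}"
  then obtain e where e: "e > 0" "\<forall>y\<in>Rn n. (\<forall>i<n. \<bar>y i - (a i + t * (b i - a i))\<bar> < e) \<longrightarrow> y \<in> A"
    using A unfolding open_Rn_def by auto
  define M where "M = 1 + (\<Sum>i<n. \<bar>b i - a i\<bar>)"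
  have M: "M > 0" "\<And>i. i < n \<Longrightarrow> \<bar>b i - a i\<bar> \<le> M"
    unfolding M_def by (auto simp: add_pos_nonneg sum_nonneg intro!: member_le_sum add_increasing)
  show "\<exists>d>0. \<forall>s. dist s t < d \<longrightarrow> s \<in> {t. (\<lambda>i. a i + t * (b i - a i)) \<in> A}"
  proof (intro exI[of _ "e / M"] conjI allI impI)
    show "e / M > 0" using e M by simp
    fix s assume s: "dist s t < e / M"
    have "\<bar>(a i + s * (b i - a i)) - (a i + t * (b i - a i))\<bar> < e" if "i < n" for i
    proof -
      have "\<bar>(a i + s * (b i - a i)) - (a i + t * (b i - a i))\<bar> = \<bar>s - t\<bar> * \<bar>b i - a i\<bar>"
        by (simp add: abs_mult[symmetric] algebra_simps)
      also have "\<dots> \<le> \<bar>s - t\<bar> * M" using M(2)[OF that] by (simp add: mult_left_mono)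
      also have "\<dots> < e / M * M"
        using mult_strict_right_mono[OF _ M(1), of "\<bar>s - t\<bar>" "e / M"] s by (simp add: dist_real_def)
      also have "\<dots> = e" using M(1) by simp
      finally show ?thesis .
    qed
    moreover have "(\<lambda>i. a i + s * (b i - a i)) \<in> Rn n" using a b unfolding Rn_def by auto
    ultimately show "s \<in> {t. (\<lambda>i. a i + t * (b i - a i)) \<in> A}" using e(2) by auto
  qed
qed

lemma convex_Rn_imp_connected_Rn:
  assumes "convex_Rn n S" shows "connected_Rn n S"
  unfolding connected_Rn_def
proof
  assume "\<exists>A B. open_Rn n A \<and> open_Rn n B \<and> A \<noteq> {} \<and> B \<noteq> {} \<and> A \<inter> B = {} \<and> A \<union> B = S"
  then obtain A B where AB: "open_Rn n A" "open_Rn n B" "A \<noteq> {}" "B \<noteq> {}" "A \<inter> B = {}" "A \<union> B = S"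
    by blast
  obtain a b where ab: "a \<in> A" "b \<in> B" using AB by blast
  have aR: "a \<in> Rn n" and bR: "b \<in> Rn n" using ab AB assms unfolding convex_Rn_def by auto
  let ?p = "\<lambda>t::real. (\<lambda>i. a i + t * (b i - a i))"
  have "{t. ?p t \<in> A} \<inter> {0..1} = {} \<or> {t. ?p t \<in> B} \<inter> {0..1} = {}"
  proof (rule connectedD[OF connected_Icc open_segment_vimage[OF AB(1) aR bR] open_segment_vimage[OF AB(2) aR bR]])
    show "{t. ?p t \<in> A} \<inter> {t. ?p t \<in> B} \<inter> {0..1} = {}" using AB(5) by auto
    show "{0..1} \<subseteq> {t. ?p t \<in> A} \<union> {t. ?p t \<in> B}"
    proof
      fix t :: real assume "t \<in> {0..1}"
      hence "?p t \<in> S" using assms ab AB(6) unfolding convex_Rn_def by auto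
      thus "t \<in> {t. ?p t \<in> A} \<union> {t. ?p t \<in> B}" using AB(6) by auto
    qed
  qed
  moreover have "0 \<in> {t. ?p t \<in> A} \<inter> {0..1}" "1 \<in> {t. ?p t \<in> B} \<inter> {0..1}" using ab by simp_all
  ultimately show False by blast
qed

definition cube :: "nat \<Rightarrow> rn \<Rightarrow> real \<Rightarrow> rn set" where
  "cube n x e = {y \<in> Rn n. \<forall>i<n. \<bar>y i - x i\<bar> < e}"

lemma open_Rn_cube: "open_Rn n (cube n x e)"
  unfolding open_Rn_def cube_def
proof (intro conjI ballI)
  fix y assume y: "y \<in> {y \<in> Rn n. \<forall>i<n. \<bar>y i - x i\<bar> < e}"
  define d where "d = Min (insert 1 ((\<lambda>i. e - \<bar>y i - x i\<bar>) ` {..<n}))"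
  have d: "d > 0" using y unfolding d_def by (subst Min_gr_iff) auto
  have "d \<le> e - \<bar>y i - x i\<bar>" if "i < n" for i unfolding d_def using that by (intro Min_le) auto
  thus "\<exists>d>0. \<forall>z\<in>Rn n. (\<forall>i<n. \<bar>z i - y i\<bar> < d) \<longrightarrow> z \<in> {y \<in> Rn n. \<forall>i<n. \<bar>y i - x i\<bar> < e}"
    using d by (intro exI[of _ d]) force
qed auto

lemma convex_Rn_cube: "convex_Rn n (cube n x e)"
  unfolding convex_Rn_def cube_def
proof (intro conjI ballI allI impI)
  fix a b and t :: real
  assume a: "a \<in> {y \<in> Rn n. \<forall>i<n. \<bar>y i - x i\<bar> < e}" and b: "b \<in> {y \<in> Rn n. \<forall>i<n. \<bar>y i - x i\<bar> < e}"
    and t: "0 \<le> t \<and> t \<le> 1"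
  have "\<bar>a i + t * (b i - a i) - x i\<bar> < e" if "i < n" for i
  proof -
    have "a i + t * (b i - a i) - x i = (1 - t) * (a i - x i) + t * (b i - x i)"
      by (simp add: algebra_simps)
    also have "\<bar>\<dots>\<bar> \<le> (1 - t) * \<bar>a i - x i\<bar> + t * \<bar>b i - x i\<bar>"
      using t by (simp add: abs_triangle_ineq[THEN order_trans] abs_mult)
    also have "\<dots> < e"
    proof -
      have "(1 - t) * \<bar>a i - x i\<bar> \<le> (1 - t) * e" "t * \<bar>b i - x i\<bar> \<le> t * e"
        using a b that t by (auto intro!: mult_left_mono)
      moreover have "(1 - t) * \<bar>a i - x i\<bar> < (1 - t) * e \<or> t * \<bar>b i - x i\<bar> < t * e"
        using a b that t by (cases "t = 1") (auto intro: mult_strict_left_mono)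
      ultimately show ?thesis by (auto simp: algebra_simps)
    qed
    finally show ?thesis .
  qed
  moreover have "(\<lambda>i. a i + t * (b i - a i)) \<in> Rn n" using a b unfolding Rn_def by auto
  ultimately show "(\<lambda>i. a i + t * (b i - a i)) \<in> {y \<in> Rn n. \<forall>i<n. \<bar>y i - x i\<bar> < e}" by auto
qed auto

lemma connected_Rn_Rn: "connected_Rn n (Rn n)"
  by (rule convex_Rn_imp_connected_Rn) (auto simp: convex_Rn_def Rn_def)

lemma connected_Rn_cube: "connected_Rn n (cube n x e)"
  by (rule convex_Rn_imp_connected_Rn[OF convex_Rn_cube])

lemma centre_in_cube: "x \<in> Rn n \<Longrightarrow> e > 0 \<Longrightarrow> x \<in> cube n x e"
  unfolding cube_def by auto

lemma open_Rn_contains_cube: "open_Rn n U \<Longrightarrow> x \<in> U \<Longrightarrow> \<exists>e>0. cube n x e \<subseteq> U"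
  unfolding open_Rn_def cube_def by blast

definition translate :: "rn \<Rightarrow> rn \<Rightarrow> rn" where
  "translate u y = (\<lambda>i. y i + u i)"

lemma translate_Rn: "u \<in> Rn n \<Longrightarrow> y \<in> Rn n \<Longrightarrow> translate u y \<in> Rn n"
  unfolding translate_def Rn_def by auto

lemma translate_translate_uminus [simp]:
  "translate (\<lambda>i. - u i) (translate u y) = y" "translate u (translate (\<lambda>i. - u i) y) = y"
  unfolding translate_def by auto

lemma translate_orig [simp]: "translate u orig = u"
  unfolding translate_def orig_def by simp

lemma smooth_map_translate:
  assumes W: "open_Rn n W" and "\<forall>w\<in>W. translate u w \<in> U" "U \<subseteq> Rn n"
  shows "smooth_map n W n U (translate u)"
proof (rule smooth_mapI)
  fix j assume "j < n"
  show "smooth_real n W (\<lambda>y. translate u y j)"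
    unfolding translate_def by (intro smooth_add smooth_coord smooth_const W)
qed (use assms in auto)

lemma image_translate_eq:
  assumes "u \<in> Rn n" "U \<subseteq> Rn n"
  shows "(\<lambda>y i. y i - u i) ` U = {y \<in> Rn n. translate u y \<in> U}"
proof
  show "(\<lambda>y i. y i - u i) ` U \<subseteq> {y \<in> Rn n. translate u y \<in> U}"
    using assms unfolding translate_def Rn_def by auto
  show "{y \<in> Rn n. translate u y \<in> U} \<subseteq> (\<lambda>y i. y i - u i) ` U"
  proof
    fix y assume "y \<in> {y \<in> Rn n. translate u y \<in> U}"
    moreover have "y = (\<lambda>i. translate u y i - u i)" unfolding translate_def by auto
    ultimately show "y \<in> (\<lambda>y i. y i - u i) ` U" by blast
  qed
qed

lemma open_Rn_translate:
  assumes U: "open_Rn n U" and u: "u \<in> Rn n"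
  shows "open_Rn n {y \<in> Rn n. translate u y \<in> U}"
  by (rule open_Rn_vimage[OF open_Rn_Rn U smooth_map_translate[OF open_Rn_Rn, where U="Rn n"]])
     (use u in \<open>auto simp: translate_Rn\<close>)

lemma connected_Rn_translate:
  assumes U: "open_Rn n U" and C: "connected_Rn n U" and u: "u \<in> Rn n"
  shows "connected_Rn n {y \<in> Rn n. translate u y \<in> U}"
  unfolding connected_Rn_def
proof
  let ?T = "\<lambda>S. {y \<in> Rn n. translate (\<lambda>i. - u i) y \<in> S}"
  have v: "(\<lambda>i. - u i) \<in> Rn n" using u unfolding Rn_def by auto
  have T_nonempty: "?T S \<noteq> {}" if S: "open_Rn n S" "S \<noteq> {}" for S
  proof -
    obtain a where "a \<in> S" using S(2) by blast
    hence "translate u a \<in> ?T S" using open_Rn_subset[OF S(1)] u by (auto simp: translate_Rn)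
    thus ?thesis by blast
  qed
  assume "\<exists>A B. open_Rn n A \<and> open_Rn n B \<and> A \<noteq> {} \<and> B \<noteq> {} \<and> A \<inter> B = {} \<and>
     A \<union> B = {y \<in> Rn n. translate u y \<in> U}"
  then obtain A B where AB: "open_Rn n A" "open_Rn n B" "A \<noteq> {}" "B \<noteq> {}" "A \<inter> B = {}"
    "A \<union> B = {y \<in> Rn n. translate u y \<in> U}" by blast
  have "?T A \<union> ?T B = U"
  proof
    show "?T A \<union> ?T B \<subseteq> U"
    proof
      fix x assume "x \<in> ?T A \<union> ?T B"
      hence "translate u (translate (\<lambda>i. - u i) x) \<in> U" using AB(6) by blast
      thus "x \<in> U" by simp
    qed
    show "U \<subseteq> ?T A \<union> ?T B"
    proof
      fix y assume y: "y \<in> U"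
      hence "translate (\<lambda>i. - u i) y \<in> A \<union> B"
        using AB(6) open_Rn_subset[OF U] translate_Rn[OF v] by auto
      thus "y \<in> ?T A \<union> ?T B" using y open_Rn_subset[OF U] by auto
    qed
  qed
  moreover have "open_Rn n (?T A)" "open_Rn n (?T B)"
    using open_Rn_translate[OF AB(1) v] open_Rn_translate[OF AB(2) v] .
  ultimately show False
    using C AB(5) T_nonempty[OF AB(1,3)] T_nonempty[OF AB(2,4)] unfolding connected_Rn_def by blast
qed

lemma fstp_Rn: "fstp n w \<in> Rn n"
  unfolding fstp_def Rn_def by auto

lemma sndp_Rn: "w \<in> Rn (2 * n) \<Longrightarrow> sndp n w \<in> Rn n"
  unfolding sndp_def Rn_def by auto

lemma smooth_map_fstp:
  assumes W: "open_Rn (2*n) W" and "\<forall>w\<in>W. fstp n w \<in> U" "U \<subseteq> Rn n"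
  shows "smooth_map (2*n) W n U (fstp n)"
proof (rule smooth_mapI)
  fix j assume "j < n"
  hence "(\<lambda>u. fstp n u j) = (\<lambda>u. u j)" unfolding fstp_def by auto
  thus "smooth_real (2*n) W (\<lambda>u. fstp n u j)" using smooth_coord[OF W] by simp
qed (use assms in auto)

lemma open_Rn_tanU:
  assumes U: "open_Rn n U" shows "open_Rn (2*n) (tanU n U)"
  unfolding tanU_def
  by (rule open_Rn_vimage[OF open_Rn_Rn U smooth_map_fstp[OF open_Rn_Rn, where U="Rn n"]])
     (auto simp: fstp_Rn)

section \<open>Plots of the fine diffeology\<close>

lemma sum_lessThan_add: "(\<Sum>k<a+b. f k) = (\<Sum>k<a. f k) + (\<Sum>k<b. f (a + k))" for a b :: nat
  by (induction b) (auto simp: add.assoc)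

definition smooth_lincomb_on :: "nat \<Rightarrow> rn set \<Rightarrow> (rn \<Rightarrow> 'v::real_vector) \<Rightarrow> bool" where
  "smooth_lincomb_on n N p \<longleftrightarrow> (\<exists>(K::nat) ws r. (\<forall>k<K. smooth_real n N (r k)) \<and>
      (\<forall>y\<in>N. p y = (\<Sum>k<K. r k y *\<^sub>R ws k)))"

lemma smooth_lincomb_onE:
  assumes "smooth_lincomb_on n N p"
  obtains K ws r where "\<forall>k<(K::nat). smooth_real n N (r k)" "\<forall>y\<in>N. p y = (\<Sum>k<K. r k y *\<^sub>R ws k)"
  using assms unfolding smooth_lincomb_on_def by blast

lemma smooth_lincomb_on_subset: "smooth_lincomb_on n N p \<Longrightarrow> N' \<subseteq> N \<Longrightarrow> smooth_lincomb_on n N' p"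
  unfolding smooth_lincomb_on_def using smooth_real_subset by blast

lemma smooth_lincomb_on_cong: "smooth_lincomb_on n N p \<Longrightarrow> \<forall>y\<in>N. p y = q y \<Longrightarrow> smooth_lincomb_on n N q"
  unfolding smooth_lincomb_on_def by auto

lemma smooth_lincomb_on_const: "smooth_lincomb_on n N (\<lambda>_. x)"
  unfolding smooth_lincomb_on_def by (intro exI[of _ 1] exI[of _ "\<lambda>_. x"] exI[of _ "\<lambda>_ _. 1"]) auto

lemma smooth_lincomb_on_add:
  assumes "smooth_lincomb_on n N p" "smooth_lincomb_on n N q"
  shows "smooth_lincomb_on n N (\<lambda>y. p y + q y)"
proof -
  obtain K ws r where p: "\<forall>k<(K::nat). smooth_real n N (r k)" "\<forall>y\<in>N. p y = (\<Sum>k<K. r k y *\<^sub>R ws k)"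
    using assms(1) by (rule smooth_lincomb_onE)
  obtain L vs s where q: "\<forall>k<(L::nat). smooth_real n N (s k)" "\<forall>y\<in>N. q y = (\<Sum>k<L. s k y *\<^sub>R vs k)"
    using assms(2) by (rule smooth_lincomb_onE)
  let ?ws = "\<lambda>k. if k < K then ws k else vs (k - K)"
  let ?r = "\<lambda>k. if k < K then r k else s (k - K)"
  show ?thesis unfolding smooth_lincomb_on_def
  proof (intro exI[of _ "K + L"] exI[of _ ?ws] exI[of _ ?r] conjI allI impI ballI)
    fix k assume "k < K + L"
    thus "smooth_real n N (?r k)" using p q by auto
  next
    fix y assume "y \<in> N"
    thus "p y + q y = (\<Sum>k<K + L. ?r k y *\<^sub>R ?ws k)"
      using p(2) q(2) by (simp add: sum_lessThan_add)
  qed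
qed

lemma smooth_lincomb_on_scale:
  assumes "smooth_lincomb_on n N p" "smooth_real n N c" "open_Rn n N"
  shows "smooth_lincomb_on n N (\<lambda>y. c y *\<^sub>R p y)"
proof -
  obtain K ws r where p: "\<forall>k<(K::nat). smooth_real n N (r k)" "\<forall>y\<in>N. p y = (\<Sum>k<K. r k y *\<^sub>R ws k)"
    using assms(1) by (rule smooth_lincomb_onE)
  show ?thesis unfolding smooth_lincomb_on_def
    using p assms(2,3) by (intro exI[of _ K] exI[of _ ws] exI[of _ "\<lambda>k y. c y * r k y"])
      (auto intro: smooth_mult simp: scaleR_sum_right)
qed

lemma smooth_lincomb_on_comp:
  assumes "smooth_lincomb_on n N p" "open_Rn m W" "open_Rn n N" "smooth_map m W n N f"
  shows "smooth_lincomb_on m W (\<lambda>y. p (f y))"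
proof -
  obtain K ws r where p: "\<forall>k<(K::nat). smooth_real n N (r k)" "\<forall>y\<in>N. p y = (\<Sum>k<K. r k y *\<^sub>R ws k)"
    using assms(1) by (rule smooth_lincomb_onE)
  show ?thesis unfolding smooth_lincomb_on_def
    using p smooth_comp[OF assms(2,3,4)] assms(4)
    by (intro exI[of _ K] exI[of _ ws] exI[of _ "\<lambda>k y. r k (f y)"]) (auto simp: smooth_map_def)
qed

text \<open>Maps that are locally finite linear combinations of vectors with smooth real coefficients
  form a vector space diffeology, hence contain every plot of the fine diffeology.\<close>

definition fine_plot :: "nat \<Rightarrow> rn set \<Rightarrow> (rn \<Rightarrow> 'v::real_vector) \<Rightarrow> bool" where
  "fine_plot n U p \<longleftrightarrow> open_Rn n U \<and>
     (\<forall>u\<in>U. \<exists>N. open_Rn n N \<and> u \<in> N \<and> N \<subseteq> U \<and> smooth_lincomb_on n N p)"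

lemma fine_plotE:
  assumes "fine_plot n U p" "u \<in> U"
  obtains N where "open_Rn n N" "u \<in> N" "N \<subseteq> U" "smooth_lincomb_on n N p"
  using assms unfolding fine_plot_def by blast

lemma fine_plot_open: "fine_plot n U p \<Longrightarrow> open_Rn n U"
  unfolding fine_plot_def by blast

lemma fine_plot_comp:
  assumes p: "fine_plot n U p" and W: "open_Rn m W" and f: "smooth_map m W n U f"
  shows "fine_plot m W (p \<circ> f)"
  unfolding fine_plot_def
proof (intro conjI ballI W)
  fix w assume w: "w \<in> W"
  have "f w \<in> U" using f w unfolding smooth_map_def by blast
  obtain N where N: "open_Rn n N" "f w \<in> N" "N \<subseteq> U" "smooth_lincomb_on n N p"
    using p \<open>f w \<in> U\<close> by (rule fine_plotE)
  define W' where "W' = {u \<in> W. f u \<in> N}"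
  have W': "open_Rn m W'" unfolding W'_def using open_Rn_vimage[OF W N(1) f] .
  have "smooth_map m W' n N f"
    by (rule smooth_map_restrict[OF f _ _ N(3)]) (auto simp: W'_def)
  hence "smooth_lincomb_on m W' (p \<circ> f)"
    using smooth_lincomb_on_comp[OF N(4) W' N(1)] unfolding comp_def by blast
  moreover have "w \<in> W'" "W' \<subseteq> W" unfolding W'_def using w N(2) by auto
  ultimately show "\<exists>N. open_Rn m N \<and> w \<in> N \<and> N \<subseteq> W \<and> smooth_lincomb_on m N (p \<circ> f)"
    using W' by blast
qed

lemma fine_plot_add:
  assumes p: "fine_plot n U p" and q: "fine_plot n U q"
  shows "fine_plot n U (\<lambda>u. p u + q u)"
  unfolding fine_plot_def
proof (intro conjI ballI fine_plot_open[OF p])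
  fix u assume u: "u \<in> U"
  obtain N1 where N1: "open_Rn n N1" "u \<in> N1" "N1 \<subseteq> U" "smooth_lincomb_on n N1 p"
    using p u by (rule fine_plotE)
  obtain N2 where N2: "open_Rn n N2" "u \<in> N2" "N2 \<subseteq> U" "smooth_lincomb_on n N2 q"
    using q u by (rule fine_plotE)
  have "smooth_lincomb_on n (N1 \<inter> N2) (\<lambda>u. p u + q u)"
    by (intro smooth_lincomb_on_add smooth_lincomb_on_subset[OF N1(4)] smooth_lincomb_on_subset[OF N2(4)]) auto
  thus "\<exists>N. open_Rn n N \<and> u \<in> N \<and> N \<subseteq> U \<and> smooth_lincomb_on n N (\<lambda>u. p u + q u)"
    using open_Rn_Int[OF N1(1) N2(1)] N1(2,3) N2(2) by blast
qed

lemma fine_plot_scale: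
  assumes c: "smooth_real n U c" and p: "fine_plot n U p"
  shows "fine_plot n U (\<lambda>u. c u *\<^sub>R p u)"
  unfolding fine_plot_def
proof (intro conjI ballI fine_plot_open[OF p])
  fix u assume u: "u \<in> U"
  obtain N where N: "open_Rn n N" "u \<in> N" "N \<subseteq> U" "smooth_lincomb_on n N p"
    using p u by (rule fine_plotE)
  thus "\<exists>N. open_Rn n N \<and> u \<in> N \<and> N \<subseteq> U \<and> smooth_lincomb_on n N (\<lambda>u. c u *\<^sub>R p u)"
    using smooth_lincomb_on_scale[OF N(4) smooth_real_subset[OF N(3) c] N(1)] by blast
qed

lemma fine_plot_sheaf:
  assumes U: "open_Rn n U" and loc: "\<forall>u\<in>U. \<exists>W. open_Rn n W \<and> u \<in> W \<and> W \<subseteq> U \<and> fine_plot n W p"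
  shows "fine_plot n U p"
  unfolding fine_plot_def
proof (intro conjI ballI U)
  fix u assume "u \<in> U"
  then obtain W where W: "u \<in> W" "W \<subseteq> U" "fine_plot n W p" using loc by blast
  obtain N where "open_Rn n N" "u \<in> N" "N \<subseteq> W" "smooth_lincomb_on n N p"
    using W(3,1) by (rule fine_plotE)
  thus "\<exists>N. open_Rn n N \<and> u \<in> N \<and> N \<subseteq> U \<and> smooth_lincomb_on n N p" using W(2) by blast
qed

lemma fine_plot_cong:
  assumes p: "fine_plot n U p" and q: "\<forall>u\<in>U. q u = p u"
  shows "fine_plot n U q"
  unfolding fine_plot_def
proof (intro conjI ballI fine_plot_open[OF p])
  fix u assume u: "u \<in> U"
  obtain N where N: "open_Rn n N" "u \<in> N" "N \<subseteq> U" "smooth_lincomb_on n N p"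
    using p u by (rule fine_plotE)
  moreover have "\<forall>y\<in>N. p y = q y" using q N(3) by auto
  ultimately show "\<exists>N. open_Rn n N \<and> u \<in> N \<and> N \<subseteq> U \<and> smooth_lincomb_on n N q"
    using smooth_lincomb_on_cong by blast
qed

lemma fine_plot_dvs_diffeology: "dvs_diffeology (fine_plot :: nat \<Rightarrow> rn set \<Rightarrow> (rn \<Rightarrow> 'v::real_vector) \<Rightarrow> bool)"
  unfolding dvs_diffeology_def diffeology_def
proof (intro conjI allI impI)
  fix n U and p :: "rn \<Rightarrow> 'v"
  assume "fine_plot n U p" thus "open_Rn n U" by (rule fine_plot_open)
next
  fix n U and p :: "rn \<Rightarrow> 'v"
  show "\<forall>u\<in>U. p u \<in> UNIV" by simp
next
  fix n U and p q :: "rn \<Rightarrow> 'v"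
  assume "fine_plot n U p \<and> (\<forall>u\<in>U. q u = p u)"
  thus "fine_plot n U q" using fine_plot_cong by blast
next
  fix n U and x :: 'v
  assume "open_Rn n U \<and> x \<in> UNIV"
  thus "fine_plot n U (\<lambda>_. x)" unfolding fine_plot_def using smooth_lincomb_on_const by blast
next
  fix n U m W f and p :: "rn \<Rightarrow> 'v"
  assume "fine_plot n U p \<and> open_Rn m W \<and> smooth_map m W n U f"
  thus "fine_plot m W (p \<circ> f)" using fine_plot_comp by blast
next
  fix n U and p :: "rn \<Rightarrow> 'v"
  assume "open_Rn n U \<and> (\<forall>u\<in>U. p u \<in> UNIV) \<and>
    (\<forall>u\<in>U. \<exists>W. open_Rn n W \<and> u \<in> W \<and> W \<subseteq> U \<and> fine_plot n W p)"
  thus "fine_plot n U p" using fine_plot_sheaf by blast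
next
  fix n U and p q :: "rn \<Rightarrow> 'v"
  assume "fine_plot n U p \<and> fine_plot n U q"
  thus "fine_plot n U (\<lambda>u. p u + q u)" using fine_plot_add by blast
next
  fix n U c and p :: "rn \<Rightarrow> 'v"
  assume "open_Rn n U \<and> smooth_real n U c \<and> fine_plot n U p"
  thus "fine_plot n U (\<lambda>u. c u *\<^sub>R p u)" using fine_plot_scale by blast
qed

lemma fine_plotI:
  assumes "fine_diffeology D" "D n U p"
  shows "fine_plot n U p"
  using assms fine_plot_dvs_diffeology unfolding fine_diffeology_def by blast

lemma fine_imp_dvs: "fine_diffeology D \<Longrightarrow> dvs_diffeology D"
  unfolding fine_diffeology_def by blast

lemma fine_imp_diffeology: "fine_diffeology D \<Longrightarrow> diffeology UNIV D"
  unfolding fine_diffeology_def dvs_diffeology_def by blast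

lemma fine_plot_domain_open: "fine_diffeology D \<Longrightarrow> D n U p \<Longrightarrow> open_Rn n U"
  using fine_plotI fine_plot_open by blast

lemma diffeology_cong: "diffeology X D \<Longrightarrow> D n U p \<Longrightarrow> \<forall>u\<in>U. q u = p u \<Longrightarrow> D n U q"
  unfolding diffeology_def by blast

lemma diffeology_const: "diffeology X D \<Longrightarrow> open_Rn n U \<Longrightarrow> x \<in> X \<Longrightarrow> D n U (\<lambda>_. x)"
  unfolding diffeology_def by blast

lemma diffeology_comp:
  "diffeology X D \<Longrightarrow> D n U p \<Longrightarrow> open_Rn m W \<Longrightarrow> smooth_map m W n U f \<Longrightarrow> D m W (p \<circ> f)"
  unfolding diffeology_def by blast

lemma diffeology_sheaf:
  "diffeology X D \<Longrightarrow> open_Rn n U \<Longrightarrow> \<forall>u\<in>U. p u \<in> X \<Longrightarrow>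
   \<forall>u\<in>U. \<exists>W. open_Rn n W \<and> u \<in> W \<and> W \<subseteq> U \<and> D n W p \<Longrightarrow> D n U p"
  unfolding diffeology_def by blast

lemma dvs_diffeology_lincomb:
  fixes K :: nat and ws :: "nat \<Rightarrow> 'v::real_vector"
  assumes D: "dvs_diffeology D" and N: "open_Rn n N" and r: "\<forall>k<K. smooth_real n N (r k)"
  shows "D n N (\<lambda>y. \<Sum>k<K. r k y *\<^sub>R ws k)"
  using r
proof (induction K)
  case 0
  thus ?case using diffeology_const[of UNIV D n N 0] D N unfolding dvs_diffeology_def by simp
next
  case (Suc K)
  have "D n N (\<lambda>_. ws K)" using diffeology_const[of UNIV D n N] D N unfolding dvs_diffeology_def by simp
  hence "D n N (\<lambda>y. r K y *\<^sub>R ws K)" using D N Suc.prems unfolding dvs_diffeology_def by blast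
  moreover have "D n N (\<lambda>y. \<Sum>k<K. r k y *\<^sub>R ws k)" using Suc by auto
  ultimately show ?case using D unfolding dvs_diffeology_def by simp
qed

section \<open>The differential of a plot at the origin\<close>

lemma linear_functionals_separate:
  fixes w :: "'v::real_vector"
  assumes "\<forall>l::'v \<Rightarrow> real. linear l \<longrightarrow> l w = 0"
  shows "w = 0"
proof (rule ccontr)
  assume "w \<noteq> 0"
  hence "independent {w}"
    using real_vector.independent_insert[of w "{}"] real_vector.independent_empty real_vector.span_empty
    by simp
  from real_vector.linear_independent_extend[OF this, of "\<lambda>_. 1"]
  obtain g :: "'v \<Rightarrow> real" where "linear g" "\<forall>x\<in>{w}. g x = 1" by blast
  thus False using assms by auto
qed

text \<open>The value of \<open>p\<^sub>*(v)\<close> is pinned down through linear functionals, because \<open>'v\<close> carries no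
  topology: for every linear \<open>l\<close> the real function \<open>l \<circ> p\<close> must have directional derivative
  \<open>l w\<close> at the origin.\<close>

definition is_plot_diff :: "nat \<Rightarrow> (rn \<Rightarrow> 'v::real_vector) \<Rightarrow> rn \<Rightarrow> 'v \<Rightarrow> bool" where
  "is_plot_diff n p v w \<longleftrightarrow>
     (\<forall>l::'v \<Rightarrow> real. linear l \<longrightarrow> l w = (\<Sum>i<n. pd i (\<lambda>y. l (p y)) orig * v i))"

definition plot_diff :: "nat \<Rightarrow> (rn \<Rightarrow> 'v::real_vector) \<Rightarrow> rn \<Rightarrow> 'v" where
  "plot_diff n p v = (THE w. is_plot_diff n p v w)"

definition lincomb_near_orig :: "nat \<Rightarrow> (rn \<Rightarrow> 'v::real_vector) \<Rightarrow> bool" where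
  "lincomb_near_orig n p \<longleftrightarrow> (\<exists>N. open_Rn n N \<and> orig \<in> N \<and> smooth_lincomb_on n N p)"

lemma plot_diff_eqI:
  assumes "is_plot_diff n p v w" shows "plot_diff n p v = w"
  unfolding plot_diff_def
proof (rule the_equality)
  show "is_plot_diff n p v w" by (rule assms)
  fix w' assume "is_plot_diff n p v w'"
  hence "\<forall>l::'a \<Rightarrow> real. linear l \<longrightarrow> l (w' - w) = 0"
    using assms unfolding is_plot_diff_def by (simp add: linear_diff)
  thus "w' = w" using linear_functionals_separate[of "w' - w"] by simp
qed

lemma plot_diff_orig: "plot_diff n p orig = 0"
  by (rule plot_diff_eqI) (simp add: is_plot_diff_def orig_def linear_0)

lemma is_plot_diff_lincomb:
  fixes K :: nat and ws :: "nat \<Rightarrow> 'v::real_vector"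
  assumes N: "open_Rn n N" "orig \<in> N" and r: "\<forall>k<K. smooth_real n N (r k)"
    and p: "\<forall>y\<in>N. p y = (\<Sum>k<K. r k y *\<^sub>R ws k)"
  shows "is_plot_diff n p v (\<Sum>k<K. (\<Sum>i<n. pd i (r k) orig * v i) *\<^sub>R ws k)"
  unfolding is_plot_diff_def
proof (intro allI impI)
  fix l :: "'v \<Rightarrow> real" assume l: "linear l"
  have lp: "\<forall>y\<in>N. l (p y) = (\<Sum>k<K. r k y * l (ws k))"
    using p l by (simp add: linear_sum linear_scale)
  have pd_lp: "pd i (\<lambda>y. l (p y)) orig = (\<Sum>k<K. pd i (r k) orig * l (ws k))" if i: "i < n" for i
  proof -
    have "has_pd i (\<lambda>y. \<Sum>k<K. r k y * l (ws k)) orig (\<Sum>k<K. pd i (r k) orig * l (ws k))"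
      using r by (intro has_pd_sum has_pd_mult_const smooth_has_pd[OF _ i N(2)]) auto
    with pd_cong[OF N i lp] show ?thesis by (simp add: pd_eqI)
  qed
  have "l (\<Sum>k<K. (\<Sum>i<n. pd i (r k) orig * v i) *\<^sub>R ws k) =
      (\<Sum>k<K. \<Sum>i<n. pd i (r k) orig * l (ws k) * v i)"
    using l by (simp add: linear_sum linear_scale sum_distrib_right mult.commute mult.left_commute)
  also have "\<dots> = (\<Sum>i<n. (\<Sum>k<K. pd i (r k) orig * l (ws k)) * v i)"
    by (subst sum.swap) (simp add: sum_distrib_right)
  also have "\<dots> = (\<Sum>i<n. pd i (\<lambda>y. l (p y)) orig * v i)"
    using pd_lp by simp
  finally show "l (\<Sum>k<K. (\<Sum>i<n. pd i (r k) orig * v i) *\<^sub>R ws k) = (\<Sum>i<n. pd i (\<lambda>y. l (p y)) orig * v i)" .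
qed

lemma plot_diff_lincomb:
  fixes K :: nat and ws :: "nat \<Rightarrow> 'v::real_vector"
  assumes "open_Rn n N" "orig \<in> N" "\<forall>k<K. smooth_real n N (r k)" "\<forall>y\<in>N. p y = (\<Sum>k<K. r k y *\<^sub>R ws k)"
  shows "plot_diff n p v = (\<Sum>k<K. (\<Sum>i<n. pd i (r k) orig * v i) *\<^sub>R ws k)"
  using plot_diff_eqI[OF is_plot_diff_lincomb[OF assms]] .

lemma is_plot_diff_plot_diff:
  assumes "lincomb_near_orig n p" shows "is_plot_diff n p v (plot_diff n p v)"
proof -
  obtain N where N: "open_Rn n N" "orig \<in> N" "smooth_lincomb_on n N p"
    using assms unfolding lincomb_near_orig_def by blast
  obtain K ws r where r: "\<forall>k<(K::nat). smooth_real n N (r k)"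
    and p_eq: "\<forall>y\<in>N. p y = (\<Sum>k<K. r k y *\<^sub>R ws k)"
    using N(3) by (rule smooth_lincomb_onE)
  show ?thesis
    using is_plot_diff_lincomb[OF N(1,2) r p_eq] plot_diff_eqI[OF is_plot_diff_lincomb[OF N(1,2) r p_eq]]
    by simp
qed

lemma plot_diff_add:
  assumes "lincomb_near_orig n p" shows "plot_diff n p (\<lambda>i. a i + b i) = plot_diff n p a + plot_diff n p b"
  using is_plot_diff_plot_diff[OF assms, of a] is_plot_diff_plot_diff[OF assms, of b]
  by (intro plot_diff_eqI) (simp add: is_plot_diff_def linear_add algebra_simps sum.distrib)

lemma plot_diff_scale:
  assumes "lincomb_near_orig n p" shows "plot_diff n p (\<lambda>i. c * a i) = c *\<^sub>R plot_diff n p a"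
proof (rule plot_diff_eqI, unfold is_plot_diff_def, intro allI impI)
  fix l :: "'a \<Rightarrow> real" assume l: "linear l"
  hence "l (plot_diff n p a) = (\<Sum>i<n. pd i (\<lambda>y. l (p y)) orig * a i)"
    using is_plot_diff_plot_diff[OF assms, of a] unfolding is_plot_diff_def by blast
  thus "l (c *\<^sub>R plot_diff n p a) = (\<Sum>i<n. pd i (\<lambda>y. l (p y)) orig * (c * a i))"
    using l by (simp add: linear_scale sum_distrib_left mult.left_commute)
qed

lemma plot_diff_chain:
  fixes p p' :: "rn \<Rightarrow> 'v::real_vector"
  assumes U: "open_Rn n U" "orig \<in> U" and U': "open_Rn n' U'"
    and f: "smooth_map n U n' U' f" and f0: "f orig = orig" and pp: "\<forall>u\<in>U. p' (f u) = p u"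
    and p': "lincomb_near_orig n' p'"
  shows "plot_diff n p v = plot_diff n' p' (dmap n f v)"
proof (rule plot_diff_eqI)
  obtain N where N: "open_Rn n' N" "orig \<in> N" "smooth_lincomb_on n' N p'"
    using p' unfolding lincomb_near_orig_def by blast
  obtain K ws r where r: "\<forall>k<(K::nat). smooth_real n' N (r k)"
    and p'_eq: "\<forall>y\<in>N. p' y = (\<Sum>k<K. r k y *\<^sub>R ws k)"
    using N(3) by (rule smooth_lincomb_onE)
  define W where "W = {u \<in> U. f u \<in> N}"
  have W: "open_Rn n W" "orig \<in> W" unfolding W_def using open_Rn_vimage[OF U(1) N(1) f] U(2) f0 N(2) by auto
  have fW: "smooth_map n W n' N f"
  proof (rule smooth_mapI)
    fix j assume "j < n'"
    thus "smooth_real n W (\<lambda>u. f u j)"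
      using smooth_real_subset[of W U] smooth_map_smooth_coord[OF f] unfolding W_def by blast
  qed (use open_Rn_subset[OF N(1)] W_def in auto)
  show "is_plot_diff n p v (plot_diff n' p' (dmap n f v))" unfolding is_plot_diff_def
  proof (intro allI impI)
    fix l :: "'v \<Rightarrow> real" assume l: "linear l"
    define g where "g y = (\<Sum>k<K. r k y * l (ws k))" for y
    have g: "smooth_real n' N g" unfolding g_def
      by (rule smooth_sum[OF _ _ N(1)]) (use r N(1) in \<open>auto intro: smooth_mult\<close>)
    have lp': "\<forall>y\<in>N. l (p' y) = g y" using p'_eq l unfolding g_def by (simp add: linear_sum linear_scale)
    have pd_lp: "pd i (\<lambda>y. l (p y)) orig = (\<Sum>j<n'. pd j g orig * pd i (\<lambda>u. f u j) orig)" if i: "i < n" for i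
    proof -
      have "pd i (\<lambda>y. l (p y)) orig = pd i (\<lambda>y. g (f y)) orig"
        using pp lp' by (intro pd_cong[OF W i]) (auto simp: W_def)
      also have "\<dots> = (\<Sum>j<n'. pd j g (f orig) * pd i (\<lambda>u. f u j) orig)"
        using pd_eqI[OF has_pd_comp[OF W(1) N(1) g fW W(2) i]] .
      finally show ?thesis using f0 by simp
    qed
    have "l (plot_diff n' p' (dmap n f v)) = (\<Sum>j<n'. pd j (\<lambda>y. l (p' y)) orig * dmap n f v j)"
      using is_plot_diff_plot_diff[OF p'] l unfolding is_plot_diff_def by blast
    also have "\<dots> = (\<Sum>j<n'. \<Sum>i<n. pd j g orig * pd i (\<lambda>u. f u j) orig * v i)"
      using pd_cong[OF N(1,2) _ lp'] by (simp add: dmap_def sum_distrib_left mult.assoc)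
    also have "\<dots> = (\<Sum>i<n. pd i (\<lambda>y. l (p y)) orig * v i)"
      using pd_lp by (subst sum.swap) (simp add: sum_distrib_right)
    finally show "l (plot_diff n' p' (dmap n f v)) = (\<Sum>i<n. pd i (\<lambda>y. l (p y)) orig * v i)" .
  qed
qed

section \<open>The comparison map from the tangent space\<close>

definition supp :: "('a pidx \<Rightarrow> rn) \<Rightarrow> 'a pidx set" where
  "supp s = {c. s c \<noteq> orig}"

abbreviation obj_diff :: "'v::real_vector pidx \<Rightarrow> rn \<Rightarrow> 'v" where
  "obj_diff c v \<equiv> plot_diff (fst c) (snd (snd c)) v"

text \<open>On the direct sum, \<open>total_diff\<close> sums the differentials \<open>p\<^sub>*\<close> of the plots indexing the
  summands; it will be shown to vanish on the relations, so that it descends to \<open>T\<^sub>0(V)\<close>.\<close>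

definition total_diff :: "('v::real_vector pidx \<Rightarrow> rn) \<Rightarrow> 'v" where
  "total_diff s = (\<Sum>c\<in>supp s. obj_diff c (s c))"

lemma total_diff_eq_sum:
  assumes "finite S" "supp s \<subseteq> S"
  shows "total_diff s = (\<Sum>c\<in>S. obj_diff c (s c))"
  unfolding total_diff_def
  by (rule sum.mono_neutral_left[OF assms]) (auto simp: supp_def plot_diff_orig)

lemma supp_ds_add: "supp (ds_add s t) \<subseteq> supp s \<union> supp t"
  unfolding supp_def ds_add_def orig_def by auto

lemma supp_ds_scale: "supp (ds_scale r s) \<subseteq> supp s"
  unfolding supp_def ds_scale_def orig_def by auto

lemma supp_delta: "supp (delta c v) \<subseteq> {c}"
  unfolding supp_def delta_def by auto

lemma ds_sub_eq_add_scale: "ds_sub a b = ds_add a (ds_scale (-1) b)"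
  unfolding ds_sub_def ds_add_def ds_scale_def by (simp add: fun_eq_iff)

lemma DS_finite_supp: "s \<in> DS D x \<Longrightarrow> finite (supp s)"
  unfolding DS_def supp_def by blast

lemma DS_supp_centred: "s \<in> DS D x \<Longrightarrow> c \<in> supp s \<Longrightarrow> centred D x c"
  unfolding DS_def supp_def by blast

lemma DS_zero: "ds_zero \<in> DS D x"
  unfolding DS_def ds_zero_def by simp

lemma DS_add:
  assumes s: "s \<in> DS D x" and t: "t \<in> DS D x"
  shows "ds_add s t \<in> DS D x"
proof -
  have "finite (supp (ds_add s t))"
    by (rule finite_subset[OF supp_ds_add]) (use DS_finite_supp[OF s] DS_finite_supp[OF t] in simp)
  moreover have "\<forall>c\<in>supp (ds_add s t). centred D x c"
    using DS_supp_centred[OF s] DS_supp_centred[OF t] supp_ds_add by blast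
  moreover have "\<forall>c. ds_add s t c \<in> Rn (fst c)" using s t unfolding DS_def ds_add_def Rn_def by auto
  ultimately show ?thesis unfolding DS_def supp_def by blast
qed

lemma DS_scale:
  assumes s: "s \<in> DS D x" shows "ds_scale r s \<in> DS D x"
proof -
  have "finite (supp (ds_scale r s))"
    by (rule finite_subset[OF supp_ds_scale]) (use DS_finite_supp[OF s] in simp)
  moreover have "\<forall>c\<in>supp (ds_scale r s). centred D x c" using DS_supp_centred[OF s] supp_ds_scale by blast
  moreover have "\<forall>c. ds_scale r s c \<in> Rn (fst c)" using s unfolding DS_def ds_scale_def Rn_def by auto
  ultimately show ?thesis unfolding DS_def supp_def by blast
qed

lemma DS_sub: "s \<in> DS D x \<Longrightarrow> t \<in> DS D x \<Longrightarrow> ds_sub s t \<in> DS D x"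
  unfolding ds_sub_eq_add_scale by (intro DS_add DS_scale)

lemma DS_delta: "centred D x c \<Longrightarrow> v \<in> Rn (fst c) \<Longrightarrow> delta c v \<in> DS D x"
  unfolding DS_def delta_def orig_def by (auto simp: Rn_def)

lemma centred_lincomb_near_orig:
  assumes "fine_diffeology D" "centred D x c"
  shows "lincomb_near_orig (fst c) (snd (snd c))"
proof -
  obtain n U p where c: "c = (n, U, p)" by (cases c) auto
  have "fine_plot n U p" "orig \<in> U" using assms fine_plotI unfolding c centred_def by auto
  then obtain N where "open_Rn n N" "orig \<in> N" "smooth_lincomb_on n N p" by (rule fine_plotE)
  thus ?thesis unfolding c lincomb_near_orig_def by auto
qed

lemma total_diff_add:
  assumes fine: "fine_diffeology D" and s: "s \<in> DS D x" and t: "t \<in> DS D x"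
  shows "total_diff (ds_add s t) = total_diff s + total_diff t"
proof -
  let ?S = "supp s \<union> supp t"
  have S: "finite ?S" using DS_finite_supp[OF s] DS_finite_supp[OF t] by simp
  have "obj_diff c (ds_add s t c) = obj_diff c (s c) + obj_diff c (t c)" if c: "c \<in> ?S" for c
  proof -
    have "centred D x c" using c DS_supp_centred[OF s] DS_supp_centred[OF t] by blast
    thus ?thesis unfolding ds_add_def by (rule plot_diff_add[OF centred_lincomb_near_orig[OF fine]])
  qed
  thus ?thesis
    by (simp add: total_diff_eq_sum[OF S supp_ds_add] total_diff_eq_sum[OF S, of s]
        total_diff_eq_sum[OF S, of t] sum.distrib)
qed

lemma total_diff_scale:
  assumes fine: "fine_diffeology D" and s: "s \<in> DS D x"
  shows "total_diff (ds_scale r s) = r *\<^sub>R total_diff s"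
proof -
  have "total_diff (ds_scale r s) = (\<Sum>c\<in>supp s. obj_diff c (ds_scale r s c))"
    by (rule total_diff_eq_sum[OF DS_finite_supp[OF s] supp_ds_scale])
  also have "\<dots> = (\<Sum>c\<in>supp s. r *\<^sub>R obj_diff c (s c))"
  proof (rule sum.cong[OF refl])
    fix c assume "c \<in> supp s"
    thus "obj_diff c (ds_scale r s c) = r *\<^sub>R obj_diff c (s c)" unfolding ds_scale_def
      by (rule plot_diff_scale[OF centred_lincomb_near_orig[OF fine DS_supp_centred[OF s]]])
  qed
  finally show ?thesis by (simp add: total_diff_def scaleR_sum_right)
qed

lemma total_diff_sub:
  assumes "fine_diffeology D" "s \<in> DS D x" "t \<in> DS D x"
  shows "total_diff (ds_sub s t) = total_diff s - total_diff t"
  using total_diff_add[OF assms(1,2) DS_scale[OF assms(3)]] total_diff_scale[OF assms(1,3), of "-1"]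
  unfolding ds_sub_eq_add_scale by simp

lemma total_diff_delta: "total_diff (delta c v) = obj_diff c v"
proof -
  have "total_diff (delta c v) = (\<Sum>c'\<in>{c}. obj_diff c' (delta c v c'))"
    by (rule total_diff_eq_sum[OF _ supp_delta]) simp
  thus ?thesis by (simp add: delta_def)
qed

lemma dmap_Rn:
  assumes U: "open_Rn n U" "orig \<in> U" and f: "smooth_map n U n' U' f"
  shows "dmap n f v \<in> Rn n'"
proof -
  have "pd i (\<lambda>u. f u j) orig = 0" if "i < n" "j \<ge> n'" for i j
  proof -
    have "\<forall>u\<in>U. f u j = 0" using f \<open>j \<ge> n'\<close> unfolding smooth_map_def Rn_def by blast
    thus ?thesis using pd_cong[OF U \<open>i < n\<close>, of "\<lambda>u. f u j" "\<lambda>_. 0"] by simp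
  qed
  thus ?thesis unfolding dmap_def Rn_def by simp
qed

lemma DS_relation_generator:
  assumes fine: "fine_diffeology D" and f: "tmorph D x c c' f" and v: "v \<in> Rn (fst c)"
  shows "ds_sub (delta c v) (delta c' (dmap (fst c) f v)) \<in> DS D x"
proof -
  obtain n U p where c: "c = (n, U, p)" by (cases c) auto
  obtain n' U' p' where c': "c' = (n', U', p')" by (cases c') auto
  have "centred D x c" "centred D x c'" "smooth_map n U n' U' f" "D n U p" "orig \<in> U"
    using f unfolding tmorph_def c c' centred_def by auto
  thus ?thesis
    using v dmap_Rn[OF fine_plot_domain_open[OF fine] _ \<open>smooth_map n U n' U' f\<close>]
    unfolding c c' by (intro DS_sub DS_delta) auto
qed

lemma total_diff_relation_generator:
  assumes fine: "fine_diffeology D" and f: "tmorph D x c c' f" and v: "v \<in> Rn (fst c)"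
  shows "total_diff (ds_sub (delta c v) (delta c' (dmap (fst c) f v))) = 0"
proof -
  obtain n U p where c: "c = (n, U, p)" by (cases c) auto
  obtain n' U' p' where c': "c' = (n', U', p')" by (cases c') auto
  have cc: "centred D x c" "centred D x c'" using f unfolding tmorph_def by auto
  have "D n U p" "orig \<in> U" "D n' U' p'" using cc unfolding c c' centred_def by auto
  hence "plot_diff n p v = plot_diff n' p' (dmap n f v)"
    using f centred_lincomb_near_orig[OF fine cc(2)] fine_plot_domain_open[OF fine]
    unfolding tmorph_def c c' by (intro plot_diff_chain) auto
  moreover have "dmap n f v \<in> Rn n'"
    using f \<open>D n U p\<close> \<open>orig \<in> U\<close> dmap_Rn[OF fine_plot_domain_open[OF fine]]
    unfolding tmorph_def c c' by auto
  ultimately show ?thesis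
    using total_diff_sub[OF fine DS_delta[OF cc(1) v], of "delta c' (dmap n f v)"] DS_delta[OF cc(2)]
    unfolding total_diff_delta c c' by simp
qed

lemma REL_memI:
  "(\<And>S. ds_subspace S \<Longrightarrow>
      {ds_sub (delta c v) (delta c' (dmap (fst c) f v)) | c c' f v. tmorph D x c c' f \<and> v \<in> Rn (fst c)} \<subseteq> S
      \<Longrightarrow> a \<in> S) \<Longrightarrow> a \<in> REL D x"
  unfolding REL_def by (rule InterI) simp

lemma REL_generator:
  "tmorph D x c c' f \<Longrightarrow> v \<in> Rn (fst c) \<Longrightarrow> ds_sub (delta c v) (delta c' (dmap (fst c) f v)) \<in> REL D x"
  by (rule REL_memI) blast

lemma REL_zero: "ds_zero \<in> REL D x"
  by (rule REL_memI) (simp add: ds_subspace_def)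

lemma REL_add: "a \<in> REL D x \<Longrightarrow> b \<in> REL D x \<Longrightarrow> ds_add a b \<in> REL D x"
  unfolding REL_def ds_subspace_def by (intro InterI) blast

lemma REL_scale: "a \<in> REL D x \<Longrightarrow> ds_scale r a \<in> REL D x"
  unfolding REL_def ds_subspace_def by (intro InterI) blast

lemma REL_sub: "a \<in> REL D x \<Longrightarrow> b \<in> REL D x \<Longrightarrow> ds_sub a b \<in> REL D x"
  unfolding ds_sub_eq_add_scale by (intro REL_add REL_scale)

lemma REL_subset_DS_total_diff_zero:
  assumes fine: "fine_diffeology D"
  shows "REL D x \<subseteq> {s \<in> DS D x. total_diff s = 0}"
proof -
  have "ds_subspace {s \<in> DS D x. total_diff s = 0}"
    unfolding ds_subspace_def
  proof (intro conjI ballI allI)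
    show "ds_zero \<in> {s \<in> DS D x. total_diff s = 0}"
      using DS_zero unfolding total_diff_def supp_def ds_zero_def by simp
  next
    fix s t assume "s \<in> {s \<in> DS D x. total_diff s = 0}" "t \<in> {s \<in> DS D x. total_diff s = 0}"
    thus "ds_add s t \<in> {s \<in> DS D x. total_diff s = 0}" using DS_add total_diff_add[OF fine] by auto
  next
    fix r s assume "s \<in> {s \<in> DS D x. total_diff s = 0}"
    thus "ds_scale r s \<in> {s \<in> DS D x. total_diff s = 0}" using DS_scale total_diff_scale[OF fine] by auto
  qed
  moreover have "{ds_sub (delta c v) (delta c' (dmap (fst c) f v)) | c c' f v.
      tmorph D x c c' f \<and> v \<in> Rn (fst c)} \<subseteq> {s \<in> DS D x. total_diff s = 0}"
  proof (rule subsetI, elim CollectE exE conjE)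
    fix s c c' f v assume "s = ds_sub (delta c v) (delta c' (dmap (fst c) f v))"
      "tmorph D x c c' f" "v \<in> Rn (fst c)"
    thus "s \<in> {s \<in> DS D x. total_diff s = 0}"
      using DS_relation_generator[OF fine] total_diff_relation_generator[OF fine] by simp
  qed
  ultimately show ?thesis unfolding REL_def by (intro Inter_lower CollectI conjI)
qed

lemma REL_trans:
  assumes "ds_sub u s \<in> REL D x" "ds_sub s t \<in> REL D x" shows "ds_sub u t \<in> REL D x"
proof -
  have "ds_sub u t = ds_add (ds_sub u s) (ds_sub s t)"
    unfolding ds_sub_def ds_add_def by (simp add: fun_eq_iff)
  thus ?thesis using REL_add[OF assms] by simp
qed

lemma tcls_self: "s \<in> DS D x \<Longrightarrow> s \<in> tcls D x s"
proof -
  have "ds_sub s s = ds_zero" unfolding ds_sub_def ds_zero_def orig_def by (simp add: fun_eq_iff)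
  thus "s \<in> DS D x \<Longrightarrow> s \<in> tcls D x s" unfolding tcls_def using REL_zero by simp
qed

lemma tcls_eq:
  assumes st: "ds_sub s t \<in> REL D x" shows "tcls D x s = tcls D x t"
proof -
  have "ds_sub t s = ds_scale (-1) (ds_sub s t)" unfolding ds_sub_def ds_scale_def by (simp add: fun_eq_iff)
  hence ts: "ds_sub t s \<in> REL D x" using REL_scale[OF st] by simp
  show ?thesis
    unfolding tcls_def
  proof (intro Collect_cong conj_cong refl iffI)
    fix u assume "ds_sub u s \<in> REL D x" thus "ds_sub u t \<in> REL D x" using st by (rule REL_trans)
  next
    fix u assume "ds_sub u t \<in> REL D x" thus "ds_sub u s \<in> REL D x" using ts by (rule REL_trans)
  qed
qed

lemma Tsp_cases:
  assumes "A \<in> Tsp D x" obtains s where "s \<in> DS D x" "A = tcls D x s"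
  using assms unfolding Tsp_def by blast

definition tangent_iso :: "(nat \<Rightarrow> rn set \<Rightarrow> (rn \<Rightarrow> 'v::real_vector) \<Rightarrow> bool) \<Rightarrow> 'v
    \<Rightarrow> ('v pidx \<Rightarrow> rn) set \<Rightarrow> 'v" where
  "tangent_iso D x A = total_diff (SOME s. s \<in> A)"

lemma tangent_iso_tcls:
  assumes fine: "fine_diffeology D" and s: "s \<in> DS D x"
  shows "tangent_iso D x (tcls D x s) = total_diff s"
proof -
  define u where "u = (SOME t. t \<in> tcls D x s)"
  have "u \<in> tcls D x s" unfolding u_def by (rule someI[of "\<lambda>t. t \<in> tcls D x s", OF tcls_self[OF s]])
  hence u: "u \<in> DS D x" "ds_sub u s \<in> REL D x" unfolding tcls_def by auto
  hence "total_diff (ds_sub u s) = 0" using REL_subset_DS_total_diff_zero[OF fine] by blast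
  hence "total_diff u - total_diff s = 0" using total_diff_sub[OF fine u(1) s] by simp
  thus ?thesis unfolding tangent_iso_def u_def[symmetric] by simp
qed

lemma T_add_tcls:
  assumes s: "s \<in> DS D x" and t: "t \<in> DS D x"
  shows "T_add D x (tcls D x s) (tcls D x t) = tcls D x (ds_add s t)"
proof
  show "T_add D x (tcls D x s) (tcls D x t) \<subseteq> tcls D x (ds_add s t)"
  proof
    fix u assume "u \<in> T_add D x (tcls D x s) (tcls D x t)"
    then obtain a b where u: "u \<in> DS D x" "a \<in> tcls D x s" "b \<in> tcls D x t" "ds_sub u (ds_add a b) \<in> REL D x"
      unfolding T_add_def by blast
    have "ds_add (ds_sub a s) (ds_sub b t) \<in> REL D x" using u(2,3) unfolding tcls_def by (auto intro: REL_add)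
    moreover have "ds_add (ds_sub a s) (ds_sub b t) = ds_sub (ds_add a b) (ds_add s t)"
      unfolding ds_sub_def ds_add_def by (simp add: fun_eq_iff)
    ultimately have "ds_sub u (ds_add s t) \<in> REL D x" using REL_trans[OF u(4)] by simp
    thus "u \<in> tcls D x (ds_add s t)" using u(1) unfolding tcls_def by blast
  qed
  show "tcls D x (ds_add s t) \<subseteq> T_add D x (tcls D x s) (tcls D x t)"
    unfolding T_add_def tcls_def using tcls_self[OF s] tcls_self[OF t] unfolding tcls_def by blast
qed

lemma T_scale_tcls:
  assumes s: "s \<in> DS D x"
  shows "T_scale D x r (tcls D x s) = tcls D x (ds_scale r s)"
proof
  show "T_scale D x r (tcls D x s) \<subseteq> tcls D x (ds_scale r s)"
  proof
    fix u assume "u \<in> T_scale D x r (tcls D x s)"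
    then obtain a where u: "u \<in> DS D x" "a \<in> tcls D x s" "ds_sub u (ds_scale r a) \<in> REL D x"
      unfolding T_scale_def by blast
    have "ds_scale r (ds_sub a s) \<in> REL D x" using u(2) unfolding tcls_def by (auto intro: REL_scale)
    moreover have "ds_scale r (ds_sub a s) = ds_sub (ds_scale r a) (ds_scale r s)"
      unfolding ds_sub_def ds_scale_def by (simp add: fun_eq_iff algebra_simps)
    ultimately have "ds_sub u (ds_scale r s) \<in> REL D x" using REL_trans[OF u(3)] by simp
    thus "u \<in> tcls D x (ds_scale r s)" using u(1) unfolding tcls_def by blast
  qed
  show "tcls D x (ds_scale r s) \<subseteq> T_scale D x r (tcls D x s)"
    unfolding T_scale_def tcls_def using tcls_self[OF s] unfolding tcls_def by blast
qed

lemma tangent_iso_add: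
  assumes fine: "fine_diffeology D" and A: "A \<in> Tsp D x" and B: "B \<in> Tsp D x"
  shows "tangent_iso D x (T_add D x A B) = tangent_iso D x A + tangent_iso D x B"
proof -
  obtain s where s: "s \<in> DS D x" "A = tcls D x s" using A by (rule Tsp_cases)
  obtain t where t: "t \<in> DS D x" "B = tcls D x t" using B by (rule Tsp_cases)
  show ?thesis
    using tangent_iso_tcls[OF fine] total_diff_add[OF fine s(1) t(1)] T_add_tcls[OF s(1) t(1)]
      DS_add[OF s(1) t(1)] s t by simp
qed

lemma tangent_iso_scale:
  assumes fine: "fine_diffeology D" and A: "A \<in> Tsp D x"
  shows "tangent_iso D x (T_scale D x r A) = r *\<^sub>R tangent_iso D x A"
proof -
  obtain s where s: "s \<in> DS D x" "A = tcls D x s" using A by (rule Tsp_cases)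
  show ?thesis
    using tangent_iso_tcls[OF fine] total_diff_scale[OF fine s(1)] T_scale_tcls[OF s(1)]
      DS_scale[OF s(1)] s by simp
qed

section \<open>Reduction to linear plots\<close>

text \<open>The linear plot \<open>y \<mapsto> \<Sum>k<K. y\<^sub>k ws\<^sub>k\<close> on all of \<open>\<real>\<^sup>K\<close>; every element of the direct sum
  is equivalent to a single vector on one such plot.\<close>

definition lincomb :: "nat \<Rightarrow> (nat \<Rightarrow> 'v::real_vector) \<Rightarrow> rn \<Rightarrow> 'v" where
  "lincomb K ws y = (\<Sum>k<K. y k *\<^sub>R ws k)"

definition lin_obj :: "nat \<Rightarrow> (nat \<Rightarrow> 'v::real_vector) \<Rightarrow> 'v pidx" where
  "lin_obj K ws = (K, Rn K, lincomb K ws)"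

definition matrix_map :: "nat \<Rightarrow> nat \<Rightarrow> (nat \<Rightarrow> nat \<Rightarrow> real) \<Rightarrow> rn \<Rightarrow> rn" where
  "matrix_map K' K M y = (\<lambda>j. if j < K' then \<Sum>m<K. M j m * y m else 0)"

lemma matrix_map_Rn: "matrix_map K' K M y \<in> Rn K'"
  unfolding matrix_map_def Rn_def by auto

lemma matrix_map_orig: "matrix_map K' K M orig = orig"
  unfolding matrix_map_def orig_def by auto

lemma smooth_map_matrix_map:
  assumes W: "open_Rn n W" shows "smooth_map n W K' (Rn K') (matrix_map K' K M)"
proof (rule smooth_mapI)
  fix j assume "j < K'"
  hence "(\<lambda>u. matrix_map K' K M u j) = (\<lambda>u. \<Sum>m<K. M j m * u m)" unfolding matrix_map_def by auto
  thus "smooth_real n W (\<lambda>u. matrix_map K' K M u j)" using smooth_lincomb_coords[OF W] by simp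
qed (auto simp: matrix_map_Rn)

lemma dmap_matrix_map: "dmap n (matrix_map K' n M) v = matrix_map K' n M v"
proof (rule ext)
  fix j
  show "dmap n (matrix_map K' n M) v j = matrix_map K' n M v j"
  proof (cases "j < K'")
    case True
    hence "(\<lambda>u. matrix_map K' n M u j) = (\<lambda>u. \<Sum>m<n. M j m * u m)" unfolding matrix_map_def by auto
    hence "dmap n (matrix_map K' n M) v j = (\<Sum>i<n. (if i < n then M j i else 0) * v i)"
      unfolding dmap_def by (simp add: pd_lincomb_coords)
    also have "\<dots> = (\<Sum>i<n. M j i * v i)" by (rule sum.cong) auto
    finally show ?thesis using True unfolding matrix_map_def by simp
  next
    case False
    hence "(\<lambda>u. matrix_map K' n M u j) = (\<lambda>u. 0)" unfolding matrix_map_def by auto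
    thus ?thesis unfolding dmap_def using False unfolding matrix_map_def by simp
  qed
qed

lemma lincomb_orig [simp]: "lincomb K ws orig = 0"
  unfolding lincomb_def orig_def by simp

lemma lincomb_add: "lincomb K ws (\<lambda>i. u i + w i) = lincomb K ws u + lincomb K ws w"
  unfolding lincomb_def by (simp add: scaleR_add_left sum.distrib)

lemma fine_plot_lincomb:
  assumes "fine_diffeology D" shows "D K (Rn K) (lincomb K ws)"
  unfolding lincomb_def
  using dvs_diffeology_lincomb[OF fine_imp_dvs[OF assms] open_Rn_Rn, where r = "\<lambda>k y. y k"]
  by (simp add: smooth_coord)

lemma centred_lin_obj: "fine_diffeology D \<Longrightarrow> centred D 0 (lin_obj K ws)"
  unfolding centred_def lin_obj_def using fine_plot_lincomb connected_Rn_Rn by auto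

lemma plot_diff_lincomb_self: "plot_diff K (lincomb K ws) a = lincomb K ws a"
proof -
  have "plot_diff K (lincomb K ws) a = (\<Sum>k<K. (\<Sum>i<K. pd i (\<lambda>y. y k) orig * a i) *\<^sub>R ws k)"
    by (rule plot_diff_lincomb[OF open_Rn_Rn orig_Rn]) (auto simp: lincomb_def intro: smooth_coord)
  also have "\<dots> = lincomb K ws a"
    unfolding lincomb_def by (rule sum.cong[OF refl]) (simp add: pd_coord sum_indicator_mult)
  finally show ?thesis .
qed

lemma DS_delta_lin_obj: "fine_diffeology D \<Longrightarrow> a \<in> Rn K \<Longrightarrow> delta (lin_obj K ws) a \<in> DS D 0"
  by (rule DS_delta[OF centred_lin_obj]) (simp_all add: lin_obj_def)

lemma REL_lin_obj_morph:
  assumes fine: "fine_diffeology D"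
    and eq: "\<forall>y\<in>Rn K1. lincomb K2 ws2 (matrix_map K2 K1 M y) = lincomb K1 ws1 y"
    and a: "a \<in> Rn K1"
  shows "ds_sub (delta (lin_obj K1 ws1) a) (delta (lin_obj K2 ws2) (matrix_map K2 K1 M a)) \<in> REL D 0"
proof -
  have "tmorph D 0 (lin_obj K1 ws1) (lin_obj K2 ws2) (matrix_map K2 K1 M)"
    unfolding tmorph_def using centred_lin_obj[OF fine] smooth_map_matrix_map[OF open_Rn_Rn]
      matrix_map_orig eq unfolding lin_obj_def by auto
  from REL_generator[OF this] a show ?thesis by (simp add: lin_obj_def dmap_matrix_map)
qed

text \<open>A vector \<open>a\<close> with \<open>\<Sum>\<^sub>k a\<^sub>k ws\<^sub>k = 0\<close> is killed by the orthogonal projection along \<open>a\<close>,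
  which is an endomorphism of the linear plot.\<close>

lemma REL_delta_lin_obj_if_lincomb_zero:
  assumes fine: "fine_diffeology D" and a: "a \<in> Rn K" and z: "lincomb K ws a = 0"
  shows "delta (lin_obj K ws) a \<in> REL D 0"
proof (cases "a = orig")
  case True thus ?thesis using REL_zero by (simp add: delta_def ds_zero_def)
next
  case False
  then obtain k0 where k0: "a k0 \<noteq> 0" unfolding orig_def by auto
  hence "k0 < K" using a unfolding Rn_def by (metis (mono_tags) mem_Collect_eq not_less)
  define q where "q = (\<Sum>k<K. a k * a k)"
  have q: "q > 0"
    unfolding q_def using \<open>k0 < K\<close> k0
    by (intro sum_pos2[of _ k0]) (auto simp: zero_less_mult_iff linorder_neq_iff)
  define M where "M j m = (if j = m then 1 else 0) - a j * a m / q" for j m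
  have M: "matrix_map K K M y j = (if j < K then y j - a j * (\<Sum>m<K. a m * y m) / q else 0)" for y j
  proof (cases "j < K")
    case True
    have "(\<Sum>m<K. M j m * y m) = (\<Sum>m<K. (if j = m then 1 else 0) * y m) - (\<Sum>m<K. a j * a m / q * y m)"
      unfolding M_def by (simp add: left_diff_distrib sum_subtractf)
    also have "\<dots> = y j - a j * (\<Sum>m<K. a m * y m) / q"
      using True by (simp add: sum_indicator_mult sum_distrib_left sum_divide_distrib mult.assoc)
    finally show ?thesis unfolding matrix_map_def using True by simp
  qed (simp add: matrix_map_def)
  have "lincomb K ws (matrix_map K K M y) = lincomb K ws y" for y
  proof -
    have "lincomb K ws (matrix_map K K M y) = lincomb K ws y - ((\<Sum>m<K. a m * y m) / q) *\<^sub>R lincomb K ws a"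
      unfolding lincomb_def M
      by (simp add: scaleR_diff_left sum_subtractf scaleR_sum_right mult.commute)
    thus ?thesis using z by simp
  qed
  hence "ds_sub (delta (lin_obj K ws) a) (delta (lin_obj K ws) (matrix_map K K M a)) \<in> REL D 0"
    by (intro REL_lin_obj_morph[OF fine _ a]) simp
  moreover have "matrix_map K K M a = orig"
    using q unfolding M orig_def q_def[symmetric] by (simp add: fun_eq_iff)
  moreover have "ds_sub (delta (lin_obj K ws) a) (delta (lin_obj K ws) orig) = delta (lin_obj K ws) a"
    unfolding ds_sub_def delta_def orig_def by (simp add: fun_eq_iff)
  ultimately show ?thesis by simp
qed

text \<open>Two linear plots are merged into the one listing both families of vectors.\<close>

lemma REL_lin_obj_merge:
  assumes fine: "fine_diffeology D" and a1: "a1 \<in> Rn K1" and a2: "a2 \<in> Rn K2"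
  obtains K ws a where "a \<in> Rn K"
    and "ds_sub (ds_add (delta (lin_obj K1 ws1) a1) (delta (lin_obj K2 ws2) a2)) (delta (lin_obj K ws) a) \<in> REL D 0"
    and "lincomb K ws a = lincomb K1 ws1 a1 + lincomb K2 ws2 a2"
proof -
  define ws where "ws k = (if k < K1 then ws1 k else ws2 (k - K1))" for k
  define M1 :: "nat \<Rightarrow> nat \<Rightarrow> real" where "M1 j m = (if j = m then 1 else 0)" for j m
  define M2 :: "nat \<Rightarrow> nat \<Rightarrow> real" where "M2 j m = (if j = K1 + m then 1 else 0)" for j m
  let ?L = "lin_obj (K1 + K2) ws"
  have m1: "matrix_map (K1 + K2) K1 M1 y j = (if j < K1 then y j else 0)" for y j
    unfolding matrix_map_def M1_def sum_indicator_mult by auto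
  have m2: "matrix_map (K1 + K2) K2 M2 y j = (if K1 \<le> j \<and> j < K1 + K2 then y (j - K1) else 0)" for y j
  proof (cases "K1 \<le> j")
    case True
    then obtain d where "j = K1 + d" using le_Suc_ex by blast
    thus ?thesis unfolding matrix_map_def M2_def by (simp add: sum_indicator_mult)
  qed (simp add: matrix_map_def M2_def)
  have e1: "lincomb (K1 + K2) ws (matrix_map (K1 + K2) K1 M1 y) = lincomb K1 ws1 y" for y
    unfolding lincomb_def sum_lessThan_add m1 ws_def by simp
  have e2: "lincomb (K1 + K2) ws (matrix_map (K1 + K2) K2 M2 y) = lincomb K2 ws2 y" for y
    unfolding lincomb_def sum_lessThan_add m2 ws_def by simp
  let ?a = "\<lambda>i. matrix_map (K1 + K2) K1 M1 a1 i + matrix_map (K1 + K2) K2 M2 a2 i"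
  show ?thesis
  proof
    show "?a \<in> Rn (K1 + K2)" using matrix_map_Rn[of "K1 + K2"] unfolding Rn_def by simp
    have "ds_add (ds_sub (delta (lin_obj K1 ws1) a1) (delta ?L (matrix_map (K1 + K2) K1 M1 a1)))
        (ds_sub (delta (lin_obj K2 ws2) a2) (delta ?L (matrix_map (K1 + K2) K2 M2 a2))) \<in> REL D 0"
      using e1 e2 by (intro REL_add REL_lin_obj_morph[OF fine _ a1] REL_lin_obj_morph[OF fine _ a2]) auto
    moreover have "ds_add (ds_sub (delta (lin_obj K1 ws1) a1) (delta ?L (matrix_map (K1 + K2) K1 M1 a1)))
        (ds_sub (delta (lin_obj K2 ws2) a2) (delta ?L (matrix_map (K1 + K2) K2 M2 a2))) =
      ds_sub (ds_add (delta (lin_obj K1 ws1) a1) (delta (lin_obj K2 ws2) a2)) (delta ?L ?a)"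
      unfolding ds_add_def ds_sub_def delta_def orig_def by (simp add: fun_eq_iff)
    ultimately show "ds_sub (ds_add (delta (lin_obj K1 ws1) a1) (delta (lin_obj K2 ws2) a2)) (delta ?L ?a) \<in> REL D 0"
      by simp
    show "lincomb (K1 + K2) ws ?a = lincomb K1 ws1 a1 + lincomb K2 ws2 a2"
      unfolding lincomb_add e1 e2 ..
  qed
qed

definition equiv_lin_obj :: "(nat \<Rightarrow> rn set \<Rightarrow> (rn \<Rightarrow> 'v::real_vector) \<Rightarrow> bool) \<Rightarrow> ('v pidx \<Rightarrow> rn) \<Rightarrow> 'v \<Rightarrow> bool" where
  "equiv_lin_obj D s v \<longleftrightarrow>
     (\<exists>K ws a. a \<in> Rn K \<and> ds_sub s (delta (lin_obj K ws) a) \<in> REL D 0 \<and> lincomb K ws a = v)"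

lemma equiv_lin_obj_zero:
  fixes D :: "nat \<Rightarrow> rn set \<Rightarrow> (rn \<Rightarrow> 'v::real_vector) \<Rightarrow> bool"
  shows "equiv_lin_obj D ds_zero 0"
proof -
  have "ds_sub ds_zero (delta (lin_obj 0 (\<lambda>_. 0)) orig) = (ds_zero :: 'v pidx \<Rightarrow> rn)"
    unfolding ds_sub_def ds_zero_def delta_def orig_def by (simp add: fun_eq_iff)
  thus ?thesis unfolding equiv_lin_obj_def using REL_zero
    by (intro exI[of _ 0] exI[of _ "\<lambda>_. 0"] exI[of _ orig]) simp
qed

lemma equiv_lin_obj_add:
  assumes fine: "fine_diffeology D" and s: "equiv_lin_obj D s v" and t: "equiv_lin_obj D t w"
  shows "equiv_lin_obj D (ds_add s t) (v + w)"
proof -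
  obtain K1 ws1 a1 where a1: "a1 \<in> Rn K1" "ds_sub s (delta (lin_obj K1 ws1) a1) \<in> REL D 0"
    "lincomb K1 ws1 a1 = v" using s unfolding equiv_lin_obj_def by blast
  obtain K2 ws2 a2 where a2: "a2 \<in> Rn K2" "ds_sub t (delta (lin_obj K2 ws2) a2) \<in> REL D 0"
    "lincomb K2 ws2 a2 = w" using t unfolding equiv_lin_obj_def by blast
  obtain K ws a where a: "a \<in> Rn K" "ds_sub (ds_add (delta (lin_obj K1 ws1) a1)
      (delta (lin_obj K2 ws2) a2)) (delta (lin_obj K ws) a) \<in> REL D 0"
    "lincomb K ws a = lincomb K1 ws1 a1 + lincomb K2 ws2 a2"
    using REL_lin_obj_merge[OF fine a1(1) a2(1)] .
  have "ds_add (ds_add (ds_sub s (delta (lin_obj K1 ws1) a1)) (ds_sub t (delta (lin_obj K2 ws2) a2)))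
      (ds_sub (ds_add (delta (lin_obj K1 ws1) a1) (delta (lin_obj K2 ws2) a2)) (delta (lin_obj K ws) a))
    = ds_sub (ds_add s t) (delta (lin_obj K ws) a)"
    by (simp add: ds_add_def ds_sub_def fun_eq_iff)
  hence "ds_sub (ds_add s t) (delta (lin_obj K ws) a) \<in> REL D 0"
    using REL_add[OF REL_add[OF a1(2) a2(2)] a(2)] by simp
  thus ?thesis unfolding equiv_lin_obj_def using a(1,3) a1(3) a2(3) by blast
qed

lemma dmap_id: "v \<in> Rn n \<Longrightarrow> dmap n (\<lambda>y. y) v = v"
  unfolding dmap_def pd_coord sum_indicator_mult by (auto simp: Rn_def fun_eq_iff)

lemma centred_restrict:
  assumes fine: "fine_diffeology D" and c: "centred D x (n, U, p)"
    and B: "open_Rn n B" "connected_Rn n B" "orig \<in> B" "B \<subseteq> U"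
  shows "centred D x (n, B, p)" and "tmorph D x (n, B, p) (n, U, p) (\<lambda>y. y)"
proof -
  have Dp: "D n U p" using c unfolding centred_def by simp
  have id: "smooth_map n B n U (\<lambda>y. y)" by (rule smooth_map_id[OF fine_plot_domain_open[of D n U p, OF fine Dp] B(4)])
  have "D n B (p \<circ> (\<lambda>y. y))" by (rule diffeology_comp[of UNIV D n U p, OF fine_imp_diffeology[OF fine] Dp B(1) id])
  thus cB: "centred D x (n, B, p)" using B c unfolding centred_def comp_def by simp
  show "tmorph D x (n, B, p) (n, U, p) (\<lambda>y. y)" using cB c id unfolding tmorph_def by simp
qed

text \<open>The coefficients of \<open>p = \<Sum>\<^sub>k r\<^sub>k ws\<^sub>k\<close>, shifted to vanish at the origin (harmless as
  \<open>p(0) = 0\<close>), form a morphism from \<open>p\<close> to the linear plot of the \<open>ws\<^sub>k\<close>.\<close>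

lemma coefficient_chart:
  fixes ws :: "nat \<Rightarrow> 'v::real_vector"
  assumes fine: "fine_diffeology D" and c: "centred D 0 (n, B, p)" and N: "open_Rn n N" "B \<subseteq> N"
    and r: "\<forall>k<K. smooth_real n N (r k)" and p: "\<forall>y\<in>N. p y = (\<Sum>k<K. r k y *\<^sub>R ws k)"
  defines "\<rho> \<equiv> \<lambda>u k. if k < K then r k u - r k orig else 0"
  shows "tmorph D 0 (n, B, p) (lin_obj K ws) \<rho>" and "lincomb K ws (dmap n \<rho> v) = plot_diff n p v"
proof -
  have B: "open_Rn n B" "orig \<in> B" "p orig = 0"
    using c fine_plot_domain_open[OF fine] unfolding centred_def by auto
  have "smooth_map n B K (Rn K) \<rho>"
  proof (rule smooth_mapI)
    fix k assume "k < K"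
    hence "(\<lambda>u. \<rho> u k) = (\<lambda>u. r k u - r k orig)" unfolding \<rho>_def by auto
    thus "smooth_real n B (\<lambda>u. \<rho> u k)"
      using r \<open>k < K\<close> smooth_real_subset[OF N(2)] by (auto intro!: smooth_diff B(1))
  qed (auto simp: \<rho>_def Rn_def)
  moreover have "(\<Sum>k<K. r k orig *\<^sub>R ws k) = 0" using p N(2) B(2,3) by auto
  hence "\<forall>u\<in>B. lincomb K ws (\<rho> u) = p u"
    using p N(2) by (auto simp: lincomb_def \<rho>_def scaleR_diff_left sum_subtractf)
  moreover have "\<rho> orig = orig" unfolding \<rho>_def orig_def by auto
  ultimately show "tmorph D 0 (n, B, p) (lin_obj K ws) \<rho>"
    using centred_lin_obj[OF fine] c unfolding tmorph_def lin_obj_def by auto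
  have "pd i (\<lambda>u. \<rho> u k) orig = pd i (r k) orig" if "k < K" "i < n" for i k
  proof -
    have "has_pd i (\<lambda>u. r k u - r k orig) orig (pd i (r k) orig - 0)"
      using smooth_has_pd r that N(2) B(2) by (intro DERIV_diff DERIV_const) blast
    thus ?thesis using \<open>k < K\<close> unfolding \<rho>_def by (simp add: pd_eqI)
  qed
  thus "lincomb K ws (dmap n \<rho> v) = plot_diff n p v"
    using plot_diff_lincomb[OF N(1) _ r p] N(2) B(2) by (auto simp: lincomb_def dmap_def)
qed

lemma equiv_lin_obj_delta:
  assumes fine: "fine_diffeology D" and c: "centred D 0 c" and v: "v \<in> Rn (fst c)"
  shows "equiv_lin_obj D (delta c v) (obj_diff c v)"
proof -
  obtain n U p where c_eq: "c = (n, U, p)" by (cases c) auto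
  have Dp: "D n U p" "orig \<in> U" and vn: "v \<in> Rn n" using c v unfolding c_eq centred_def by auto
  obtain N where N: "open_Rn n N" "orig \<in> N" "N \<subseteq> U" "smooth_lincomb_on n N p"
    using fine_plotI[of D n U p, OF fine Dp(1)] Dp(2) by (rule fine_plotE)
  obtain K ws r where r: "\<forall>k<(K::nat). smooth_real n N (r k)" and p: "\<forall>y\<in>N. p y = (\<Sum>k<K. r k y *\<^sub>R ws k)"
    using N(4) by (rule smooth_lincomb_onE)
  obtain e where "e > 0" "cube n orig e \<subseteq> N" using open_Rn_contains_cube[OF N(1,2)] by blast
  define B where "B = cube n orig e"
  have B: "open_Rn n B" "orig \<in> B" "B \<subseteq> N" "connected_Rn n B"
    unfolding B_def using open_Rn_cube centre_in_cube[OF orig_Rn \<open>e > 0\<close>] \<open>cube n orig e \<subseteq> N\<close>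
      connected_Rn_cube by auto
  have restr: "centred D 0 (n, B, p)" "tmorph D 0 (n, B, p) c (\<lambda>y. y)"
    using centred_restrict[OF fine c[unfolded c_eq] B(1,4,2)] B(3) N(3) unfolding c_eq by auto
  define \<rho> where "\<rho> = (\<lambda>u k. if k < K then r k u - r k orig else 0)"
  have chart: "tmorph D 0 (n, B, p) (lin_obj K ws) \<rho>" "lincomb K ws (dmap n \<rho> v) = plot_diff n p v"
    unfolding \<rho>_def by (rule coefficient_chart[OF fine restr(1) N(1) B(3) r p])+
  have "ds_sub (delta (n, B, p) v) (delta (lin_obj K ws) (dmap n \<rho> v)) \<in> REL D 0"
    using REL_generator[OF chart(1), of v] vn by simp
  moreover have "ds_sub (delta (n, B, p) v) (delta c v) \<in> REL D 0"
    using REL_generator[OF restr(2), of v] vn by (simp add: dmap_id)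
  ultimately have "ds_sub (ds_sub (delta (n, B, p) v) (delta (lin_obj K ws) (dmap n \<rho> v)))
      (ds_sub (delta (n, B, p) v) (delta c v)) \<in> REL D 0"
    by (rule REL_sub)
  moreover have "ds_sub (ds_sub (delta (n, B, p) v) (delta (lin_obj K ws) (dmap n \<rho> v)))
      (ds_sub (delta (n, B, p) v) (delta c v)) = ds_sub (delta c v) (delta (lin_obj K ws) (dmap n \<rho> v))"
    unfolding ds_sub_def by (simp add: fun_eq_iff)
  moreover have "dmap n \<rho> v \<in> Rn K" unfolding dmap_def Rn_def \<rho>_def by simp
  ultimately show ?thesis unfolding equiv_lin_obj_def using chart(2) c_eq by auto
qed

lemma DS_delta_component: "s \<in> DS D x \<Longrightarrow> delta c (s c) \<in> DS D x"
  by (cases "s c = orig") (auto simp: DS_def delta_def supp_def)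

lemma equiv_lin_obj_total_diff:
  assumes fine: "fine_diffeology D" and s: "s \<in> DS D 0"
  shows "equiv_lin_obj D s (total_diff s)"
proof -
  have "\<forall>s. s \<in> DS D 0 \<longrightarrow> supp s \<subseteq> F \<longrightarrow> equiv_lin_obj D s (total_diff s)" if "finite F" for F
    using that
  proof (induction F rule: finite_induct)
    case empty
    show ?case
    proof (intro allI impI)
      fix s assume "s \<in> DS D 0" "supp s \<subseteq> {}"
      hence s0: "s = ds_zero" unfolding supp_def ds_zero_def by auto
      hence "total_diff s = 0" unfolding total_diff_def supp_def ds_zero_def by simp
      thus "equiv_lin_obj D s (total_diff s)" using equiv_lin_obj_zero s0 by simp
    qed
  next
    case (insert c F)
    show ?case
    proof (intro allI impI)
      fix s assume s: "s \<in> DS D 0" and supp_s: "supp s \<subseteq> insert c F"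
      define s' where "s' = (\<lambda>c'. if c' = c then orig else s c')"
      have s': "s' \<in> DS D 0" using s unfolding DS_def s'_def by (auto elim: finite_subset[rotated])
      moreover have "supp s' \<subseteq> F" using supp_s unfolding supp_def s'_def by auto
      ultimately have "equiv_lin_obj D s' (total_diff s')" using insert.IH by blast
      moreover have "equiv_lin_obj D (delta c (s c)) (obj_diff c (s c))"
      proof (cases "s c = orig")
        case True
        have "delta c orig = ds_zero" unfolding delta_def ds_zero_def by auto
        thus ?thesis using True equiv_lin_obj_zero[of D] plot_diff_orig[of "fst c" "snd (snd c)"] by simp
      next
        case False
        hence "centred D 0 c" using DS_supp_centred[OF s] unfolding supp_def by blast
        moreover have "s c \<in> Rn (fst c)" using s unfolding DS_def by blast
        ultimately show ?thesis by (rule equiv_lin_obj_delta[OF fine])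
      qed
      moreover have split: "s = ds_add s' (delta c (s c))"
        unfolding ds_add_def s'_def delta_def orig_def by (simp add: fun_eq_iff)
      moreover have "total_diff s = total_diff s' + obj_diff c (s c)"
        by (subst split) (simp add: total_diff_add[OF fine s' DS_delta_component[OF s]] total_diff_delta)
      ultimately show "equiv_lin_obj D s (total_diff s)" using equiv_lin_obj_add[OF fine] by metis
    qed
  qed
  thus ?thesis using DS_finite_supp[OF s] s by blast
qed

lemma REL_if_total_diff_zero:
  assumes fine: "fine_diffeology D" and s: "s \<in> DS D 0" and z: "total_diff s = 0"
  shows "s \<in> REL D 0"
proof -
  obtain K ws a where "a \<in> Rn K" "ds_sub s (delta (lin_obj K ws) a) \<in> REL D 0" "lincomb K ws a = 0"
    using equiv_lin_obj_total_diff[OF fine s] z unfolding equiv_lin_obj_def by auto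
  hence "ds_add (ds_sub s (delta (lin_obj K ws) a)) (delta (lin_obj K ws) a) \<in> REL D 0"
    by (intro REL_add REL_delta_lin_obj_if_lincomb_zero[OF fine])
  moreover have "ds_add (ds_sub s (delta (lin_obj K ws) a)) (delta (lin_obj K ws) a) = s"
    unfolding ds_add_def ds_sub_def by (simp add: fun_eq_iff)
  ultimately show ?thesis by simp
qed

lemma bij_betw_tangent_iso:
  fixes D :: "nat \<Rightarrow> rn set \<Rightarrow> (rn \<Rightarrow> 'v::real_vector) \<Rightarrow> bool"
  assumes fine: "fine_diffeology D"
  shows "bij_betw (tangent_iso D 0) (Tsp D 0) UNIV"
  unfolding bij_betw_def
proof
  show "inj_on (tangent_iso D 0) (Tsp D 0)"
  proof (rule inj_onI)
    fix A B assume A: "A \<in> Tsp D 0" and B: "B \<in> Tsp D 0" and eq: "tangent_iso D 0 A = tangent_iso D 0 B"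
    obtain s where s: "s \<in> DS D 0" "A = tcls D 0 s" using A by (rule Tsp_cases)
    obtain t where t: "t \<in> DS D 0" "B = tcls D 0 t" using B by (rule Tsp_cases)
    have "total_diff (ds_sub s t) = 0"
      using eq tangent_iso_tcls[OF fine] total_diff_sub[OF fine s(1) t(1)] s t by simp
    hence "ds_sub s t \<in> REL D 0" by (rule REL_if_total_diff_zero[OF fine DS_sub[OF s(1) t(1)]])
    thus "A = B" unfolding s(2) t(2) by (rule tcls_eq)
  qed
  show "tangent_iso D 0 ` Tsp D 0 = UNIV"
  proof (intro set_eqI iffI)
    fix w :: 'v
    define e0 :: rn where "e0 = (\<lambda>i. if i = 0 then 1 else 0)"
    have e0: "e0 \<in> Rn 1" unfolding e0_def Rn_def by auto
    have s: "delta (lin_obj 1 (\<lambda>_. w)) e0 \<in> DS D 0" by (rule DS_delta_lin_obj[OF fine e0])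
    have "tangent_iso D 0 (tcls D 0 (delta (lin_obj 1 (\<lambda>_. w)) e0)) = w"
      unfolding tangent_iso_tcls[OF fine s] total_diff_delta
      by (simp add: lin_obj_def plot_diff_lincomb_self lincomb_def e0_def)
    moreover have "tcls D 0 (delta (lin_obj 1 (\<lambda>_. w)) e0) \<in> Tsp D 0" unfolding Tsp_def using s by (rule imageI)
    ultimately show "w \<in> tangent_iso D 0 ` Tsp D 0" by (metis image_eqI)
  qed simp
qed

section \<open>Smoothness of the comparison map and of its inverse\<close>

text \<open>A diffeology on \<open>TV\<close> containing Hector's generators: its plots are those whose base
  point and whose image under the comparison map are plots of \<open>V\<close>.\<close>

definition iso_plot :: "(nat \<Rightarrow> rn set \<Rightarrow> (rn \<Rightarrow> 'v::real_vector) \<Rightarrow> bool) \<Rightarrow>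
    nat \<Rightarrow> rn set \<Rightarrow> (rn \<Rightarrow> 'v \<times> ('v pidx \<Rightarrow> rn) set) \<Rightarrow> bool" where
  "iso_plot D m W Q \<longleftrightarrow> open_Rn m W \<and> (\<forall>w\<in>W. Q w \<in> TX UNIV D) \<and> D m W (\<lambda>w. fst (Q w)) \<and>
      D m W (\<lambda>w. tangent_iso D (fst (Q w)) (snd (Q w)))"

lemma iso_plot_diffeology:
  assumes fine: "fine_diffeology D"
  shows "diffeology (TX UNIV D) (iso_plot D)"
  unfolding diffeology_def
proof (intro conjI allI impI)
  have dD: "diffeology UNIV D" by (rule fine_imp_diffeology[OF fine])
  let ?\<phi> = "\<lambda>w. tangent_iso D (fst w) (snd w)"
  {
    fix n U p assume "iso_plot D n U p" thus "open_Rn n U" unfolding iso_plot_def by blast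
  next
    fix n U p assume "iso_plot D n U p" thus "\<forall>u\<in>U. p u \<in> TX UNIV D" unfolding iso_plot_def by blast
  next
    fix n U p q assume a: "iso_plot D n U p \<and> (\<forall>u\<in>U. q u = p u)"
    hence e: "\<forall>u\<in>U. fst (q u) = fst (p u)" "\<forall>u\<in>U. ?\<phi> (q u) = ?\<phi> (p u)" by auto
    have "D n U (\<lambda>w. fst (q w))" "D n U (\<lambda>w. ?\<phi> (q w))"
      using a diffeology_cong[OF dD _ e(1)] diffeology_cong[OF dD _ e(2)] unfolding iso_plot_def by auto
    thus "iso_plot D n U q" using a unfolding iso_plot_def by auto
  next
    fix n U x assume "open_Rn n U \<and> x \<in> TX UNIV D"
    thus "iso_plot D n U (\<lambda>_. x)" unfolding iso_plot_def
      using diffeology_const[OF dD, of n U "fst x"] diffeology_const[OF dD, of n U "?\<phi> x"] by auto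
  next
    fix n U p m W f assume a: "iso_plot D n U p \<and> open_Rn m W \<and> smooth_map m W n U f"
    have p: "D n U (\<lambda>w. fst (p w))" "D n U (\<lambda>w. ?\<phi> (p w))" using a unfolding iso_plot_def by auto
    have "D m W ((\<lambda>w. fst (p w)) \<circ> f)" "D m W ((\<lambda>w. ?\<phi> (p w)) \<circ> f)"
      using diffeology_comp[of UNIV D n U "\<lambda>w. fst (p w)" m W f, OF dD p(1)]
        diffeology_comp[of UNIV D n U "\<lambda>w. ?\<phi> (p w)" m W f, OF dD p(2)] a by simp_all
    moreover have "\<forall>w\<in>W. (p \<circ> f) w \<in> TX UNIV D" using a unfolding iso_plot_def smooth_map_def by auto
    ultimately show "iso_plot D m W (p \<circ> f)" unfolding iso_plot_def using a by (simp add: comp_def)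
  next
    fix n U p
    assume a: "open_Rn n U \<and> (\<forall>u\<in>U. p u \<in> TX UNIV D) \<and>
       (\<forall>u\<in>U. \<exists>W. open_Rn n W \<and> u \<in> W \<and> W \<subseteq> U \<and> iso_plot D n W p)"
    have "D n U (\<lambda>w. fst (p w))" by (rule diffeology_sheaf[OF dD]) (use a in \<open>auto simp: iso_plot_def\<close>)
    moreover have "D n U (\<lambda>w. ?\<phi> (p w))" by (rule diffeology_sheaf[OF dD]) (use a in \<open>auto simp: iso_plot_def\<close>)
    ultimately show "iso_plot D n U p" unfolding iso_plot_def using a by blast
  }
qed

lemma centred_translate:
  assumes fine: "fine_diffeology D" and f: "D n U f" and C: "connected_Rn n U" and u: "u \<in> U"
  shows "centred D (f u) (n, (\<lambda>y i. y i - u i) ` U, \<lambda>y. f (\<lambda>i. y i + u i))"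
proof -
  have U: "open_Rn n U" by (rule fine_plot_domain_open[of D n U f, OF fine f])
  have uR: "u \<in> Rn n" using u open_Rn_subset[OF U] by blast
  define T where "T = {y \<in> Rn n. translate u y \<in> U}"
  have T: "open_Rn n T" "connected_Rn n T" "orig \<in> T"
    unfolding T_def using open_Rn_translate[OF U uR] connected_Rn_translate[OF U C uR] u by auto
  have "smooth_map n T n U (translate u)"
    by (rule smooth_map_translate[OF T(1)]) (use open_Rn_subset[OF U] in \<open>auto simp: T_def\<close>)
  hence "D n T (f \<circ> translate u)"
    by (rule diffeology_comp[of UNIV D n U f, OF fine_imp_diffeology[OF fine] f T(1)])
  moreover have "f \<circ> translate u = (\<lambda>y. f (\<lambda>i. y i + u i))" unfolding translate_def comp_def ..
  moreover have "(\<lambda>i. orig i + u i) = u" unfolding orig_def by simp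
  ultimately show ?thesis
    unfolding centred_def image_translate_eq[OF uR open_Rn_subset[OF U]] T_def[symmetric] using T by simp
qed

lemma plot_diff_translate:
  fixes ws :: "nat \<Rightarrow> 'v::real_vector"
  assumes N: "open_Rn n N" and u: "u \<in> N" and r: "\<forall>k<K. smooth_real n N (r k)"
    and f: "\<forall>y\<in>N. f y = (\<Sum>k<K. r k y *\<^sub>R ws k)"
  shows "plot_diff n (\<lambda>y. f (\<lambda>i. y i + u i)) v = (\<Sum>k<K. (\<Sum>i<n. pd i (r k) u * v i) *\<^sub>R ws k)"
proof -
  have uR: "u \<in> Rn n" using u open_Rn_subset[OF N] by blast
  define N0 where "N0 = {y \<in> Rn n. translate u y \<in> N}"
  have N0: "open_Rn n N0" "orig \<in> N0" unfolding N0_def using open_Rn_translate[OF N uR] u uR by auto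
  have "smooth_map n N0 n N (translate u)"
    by (rule smooth_map_translate[OF N0(1)]) (use open_Rn_subset[OF N] in \<open>auto simp: N0_def\<close>)
  hence "\<forall>k<K. smooth_real n N0 (\<lambda>y. r k (translate u y))" using smooth_comp[OF N0(1) N] r by blast
  moreover have "\<forall>y\<in>N0. f (\<lambda>i. y i + u i) = (\<Sum>k<K. r k (translate u y) *\<^sub>R ws k)"
    using f unfolding N0_def translate_def by auto
  ultimately have "plot_diff n (\<lambda>y. f (\<lambda>i. y i + u i)) v =
      (\<Sum>k<K. (\<Sum>i<n. pd i (\<lambda>y. r k (translate u y)) orig * v i) *\<^sub>R ws k)"
    by (rule plot_diff_lincomb[OF N0])
  moreover have "pd i (\<lambda>y. r k (translate u y)) orig = pd i (r k) u" for i k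
  proof -
    have "translate u (orig(i := orig i + t)) = u(i := u i + t)" for t
      unfolding translate_def orig_def by (simp add: fun_eq_iff)
    thus ?thesis unfolding pd_def by simp
  qed
  ultimately show ?thesis by simp
qed

text \<open>Locally \<open>f = \<Sum>\<^sub>k r\<^sub>k ws\<^sub>k\<close>, so the differential of the translated plot at the tangent vector
  \<open>w\<close> is \<open>\<Sum>\<^sub>k (D r\<^sub>k)(fst w)(snd w) ws\<^sub>k\<close>: a linear combination with smooth coefficients.\<close>

lemma plot_diff_translate_plot:
  fixes D :: "nat \<Rightarrow> rn set \<Rightarrow> (rn \<Rightarrow> 'v::real_vector) \<Rightarrow> bool"
  assumes fine: "fine_diffeology D" and f: "D n U f"
  shows "D (2 * n) (tanU n U) (\<lambda>w. plot_diff n (\<lambda>y. f (\<lambda>i. y i + fstp n w i)) (sndp n w))"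
proof -
  have U: "open_Rn n U" by (rule fine_plot_domain_open[of D n U f, OF fine f])
  have "\<exists>W. open_Rn (2 * n) W \<and> w0 \<in> W \<and> W \<subseteq> tanU n U \<and>
      D (2 * n) W (\<lambda>w. plot_diff n (\<lambda>y. f (\<lambda>i. y i + fstp n w i)) (sndp n w))"
    if w0: "w0 \<in> tanU n U" for w0
  proof -
    have "fstp n w0 \<in> U" using w0 unfolding tanU_def by blast
    with fine_plotI[of D n U f, OF fine f]
    obtain N where N: "open_Rn n N" "fstp n w0 \<in> N" "N \<subseteq> U" "smooth_lincomb_on n N f"
      by (rule fine_plotE)
    obtain K ws r where r: "\<forall>k<(K::nat). smooth_real n N (r k)" and f_eq: "\<forall>y\<in>N. f y = (\<Sum>k<K. r k y *\<^sub>R ws k)"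
      using N(4) by (rule smooth_lincomb_onE)
    define W where "W = tanU n N"
    have W: "open_Rn (2 * n) W" "w0 \<in> W" "W \<subseteq> tanU n U"
      unfolding W_def using open_Rn_tanU[OF N(1)] w0 N(2,3) unfolding tanU_def by auto
    have fstp: "smooth_map (2 * n) W n N (fstp n)"
      by (rule smooth_map_fstp[OF W(1)]) (use open_Rn_subset[OF N(1)] in \<open>auto simp: W_def tanU_def\<close>)
    define \<rho> where "\<rho> k w = (\<Sum>i<n. pd i (r k) (fstp n w) * w (i + n))" for k w
    have "\<forall>k<K. smooth_real (2 * n) W (\<rho> k)"
      unfolding \<rho>_def using r
      by (auto intro!: smooth_sum smooth_mult smooth_coord W(1) smooth_comp[OF W(1) N(1) fstp] smooth_pd)
    hence "D (2 * n) W (\<lambda>w. \<Sum>k<K. \<rho> k w *\<^sub>R ws k)"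
      by (rule dvs_diffeology_lincomb[OF fine_imp_dvs[OF fine] W(1)])
    moreover have "\<forall>w\<in>W. plot_diff n (\<lambda>y. f (\<lambda>i. y i + fstp n w i)) (sndp n w) = (\<Sum>k<K. \<rho> k w *\<^sub>R ws k)"
      using plot_diff_translate[OF N(1) _ r f_eq] unfolding W_def tanU_def \<rho>_def sndp_def by auto
    ultimately have "D (2 * n) W (\<lambda>w. plot_diff n (\<lambda>y. f (\<lambda>i. y i + fstp n w i)) (sndp n w))"
      by (rule diffeology_cong[OF fine_imp_diffeology[OF fine]])
    thus ?thesis using W by blast
  qed
  thus ?thesis
    by (intro diffeology_sheaf[of UNIV D "2 * n" "tanU n U", OF fine_imp_diffeology[OF fine] open_Rn_tanU[OF U]])
      simp_all
qed

lemma iso_plot_Tmap: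
  fixes D :: "nat \<Rightarrow> rn set \<Rightarrow> (rn \<Rightarrow> 'v::real_vector) \<Rightarrow> bool"
  assumes fine: "fine_diffeology D" and f: "D n U f" and C: "connected_Rn n U"
  shows "iso_plot D (2 * n) (tanU n U) (Tmap D n U f)"
proof -
  have U: "open_Rn n U" by (rule fine_plot_domain_open[of D n U f, OF fine f])
  let ?c = "\<lambda>w. (n, (\<lambda>y i. y i - fstp n w i) ` U, \<lambda>y. f (\<lambda>i. y i + fstp n w i))"
  have Tmap: "Tmap D n U f w = (f (fstp n w), tinj D (f (fstp n w)) (?c w) (sndp n w))" for w
    unfolding Tmap_def Let_def ..
  have DS: "delta (?c w) (sndp n w) \<in> DS D (f (fstp n w))" if "w \<in> tanU n U" for w
    using that centred_translate[of D n U f, OF fine f C] sndp_Rn unfolding tanU_def by (auto intro!: DS_delta)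
  have "smooth_map (2 * n) (tanU n U) n U (fstp n)"
    by (rule smooth_map_fstp[OF open_Rn_tanU[OF U]]) (use open_Rn_subset[OF U] in \<open>auto simp: tanU_def\<close>)
  hence "D (2 * n) (tanU n U) (f \<circ> fstp n)"
    by (rule diffeology_comp[of UNIV D n U f, OF fine_imp_diffeology[OF fine] f open_Rn_tanU[OF U]])
  moreover have eq: "\<forall>w\<in>tanU n U. tangent_iso D (fst (Tmap D n U f w)) (snd (Tmap D n U f w)) =
      plot_diff n (\<lambda>y. f (\<lambda>i. y i + fstp n w i)) (sndp n w)"
  proof
    fix w assume "w \<in> tanU n U"
    from tangent_iso_tcls[OF fine DS[OF this]]
    show "tangent_iso D (fst (Tmap D n U f w)) (snd (Tmap D n U f w)) =
        plot_diff n (\<lambda>y. f (\<lambda>i. y i + fstp n w i)) (sndp n w)"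
      unfolding Tmap tinj_def total_diff_delta by simp
  qed
  have "D (2 * n) (tanU n U) (\<lambda>w. plot_diff n (\<lambda>y. f (\<lambda>i. y i + fstp n w i)) (sndp n w))"
    by (rule plot_diff_translate_plot[of D n U f, OF fine f])
  from diffeology_cong[OF fine_imp_diffeology[OF fine] this eq]
  have "D (2 * n) (tanU n U) (\<lambda>w. tangent_iso D (fst (Tmap D n U f w)) (snd (Tmap D n U f w)))" .
  moreover have "\<forall>w\<in>tanU n U. Tmap D n U f w \<in> TX UNIV D"
    unfolding TX_def Tmap tinj_def Tsp_def using DS by auto
  ultimately show ?thesis
    unfolding iso_plot_def using open_Rn_tanU[OF U] by (simp add: Tmap comp_def)
qed

lemma tangent_iso_smooth:
  fixes D :: "nat \<Rightarrow> rn set \<Rightarrow> (rn \<Rightarrow> 'v::real_vector) \<Rightarrow> bool"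
  assumes fine: "fine_diffeology D" and q: "T_diff UNIV D 0 n W q"
  shows "D n W (tangent_iso D 0 \<circ> q)"
proof -
  have "\<forall>n U f. D n U f \<and> connected_Rn n U \<longrightarrow> iso_plot D (2 * n) (tanU n U) (Tmap D n U f)"
    using iso_plot_Tmap[OF fine] by blast
  with iso_plot_diffeology[OF fine] have "iso_plot D n W (\<lambda>w. (0, q w))"
    using q[unfolded T_diff_def hector_def, THEN spec[where x = "iso_plot D"]] by blast
  thus ?thesis unfolding iso_plot_def comp_def by simp
qed

lemma Tmap_lin_obj_at_orig:
  assumes "fstp K w = orig"
  shows "Tmap D K (Rn K) (lincomb K ws) w = (0, tinj D 0 (lin_obj K ws) (sndp K w))"
proof -
  have "(\<lambda>y i. y i - orig i) ` Rn K = Rn K" "(\<lambda>y. lincomb K ws (\<lambda>i. y i + orig i)) = lincomb K ws"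
    unfolding orig_def by (simp_all add: fun_eq_iff)
  thus ?thesis using assms unfolding Tmap_def Let_def lin_obj_def by simp
qed

lemma inv_tangent_iso_lincomb:
  fixes D :: "nat \<Rightarrow> rn set \<Rightarrow> (rn \<Rightarrow> 'v::real_vector) \<Rightarrow> bool"
  assumes fine: "fine_diffeology D" and a: "a \<in> Rn K"
  shows "inv_into (Tsp D 0) (tangent_iso D 0) (lincomb K ws a) = tinj D 0 (lin_obj K ws) a"
proof -
  have s: "delta (lin_obj K ws) a \<in> DS D 0" by (rule DS_delta_lin_obj[OF fine a])
  have "tangent_iso D 0 (tinj D 0 (lin_obj K ws) a) = lincomb K ws a"
    unfolding tinj_def tangent_iso_tcls[OF fine s] total_diff_delta
    by (simp add: lin_obj_def plot_diff_lincomb_self)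
  moreover have "tinj D 0 (lin_obj K ws) a \<in> Tsp D 0" unfolding tinj_def Tsp_def using s by (rule imageI)
  ultimately show ?thesis
    using inv_into_f_f[OF bij_betw_imp_inj_on[OF bij_betw_tangent_iso[OF fine]]] by metis
qed

text \<open>A plot \<open>\<Sum>\<^sub>k r\<^sub>k ws\<^sub>k\<close> of \<open>V\<close>, carried into \<open>T\<^sub>0(V)\<close>, is the generator \<open>T(lincomb K ws)\<close>
  composed with the smooth map \<open>u \<mapsto> (0, r(u))\<close> into \<open>T\<real>\<^sup>K\<close>.\<close>

lemma inv_tangent_iso_lincomb_plot:
  fixes D :: "nat \<Rightarrow> rn set \<Rightarrow> (rn \<Rightarrow> 'v::real_vector) \<Rightarrow> bool"
  assumes fine: "fine_diffeology D" and D': "diffeology (TX UNIV D) D'"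
    and gen: "D' (2 * K) (tanU K (Rn K)) (Tmap D K (Rn K) (lincomb K ws))"
    and N: "open_Rn n N" and r: "\<forall>k<K. smooth_real n N (r k)" and p: "\<forall>y\<in>N. p y = (\<Sum>k<K. r k y *\<^sub>R ws k)"
  shows "D' n N (\<lambda>u. (0, inv_into (Tsp D 0) (tangent_iso D 0) (p u)))"
proof -
  define g where "g u = (\<lambda>i. if K \<le> i \<and> i < 2 * K then r (i - K) u else 0)" for u
  have fstp_g: "fstp K (g u) = orig" for u unfolding fstp_def g_def orig_def by auto
  have sndp_g: "sndp K (g u) = (\<lambda>i. if i < K then r i u else 0)" for u
    unfolding sndp_def g_def by (auto simp: fun_eq_iff)
  have "smooth_map n N (2 * K) (tanU K (Rn K)) g"
  proof (rule smooth_mapI)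
    have "g u \<in> Rn (2 * K)" for u by (simp add: g_def Rn_def)
    thus "g u \<in> tanU K (Rn K)" for u unfolding tanU_def using fstp_g by simp
    fix j assume "j < 2 * K"
    thus "smooth_real n N (\<lambda>u. g u j)" using r by (cases "K \<le> j") (simp_all add: g_def)
  qed (auto simp: tanU_def)
  hence "D' n N (Tmap D K (Rn K) (lincomb K ws) \<circ> g)"
    using diffeology_comp[of "TX UNIV D" D' "2 * K" "tanU K (Rn K)" "Tmap D K (Rn K) (lincomb K ws)" n N g,
      OF D' gen N] by blast
  moreover have "\<forall>u\<in>N. (0, inv_into (Tsp D 0) (tangent_iso D 0) (p u)) = (Tmap D K (Rn K) (lincomb K ws) \<circ> g) u"
  proof
    fix u assume "u \<in> N"
    hence "p u = lincomb K ws (sndp K (g u))" using p unfolding sndp_g lincomb_def by simp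
    moreover have "sndp K (g u) \<in> Rn K" unfolding sndp_g Rn_def by simp
    ultimately have "inv_into (Tsp D 0) (tangent_iso D 0) (p u) = tinj D 0 (lin_obj K ws) (sndp K (g u))"
      using inv_tangent_iso_lincomb[OF fine] by simp
    thus "(0, inv_into (Tsp D 0) (tangent_iso D 0) (p u)) = (Tmap D K (Rn K) (lincomb K ws) \<circ> g) u"
      unfolding comp_def Tmap_lin_obj_at_orig[OF fstp_g] by simp
  qed
  ultimately show ?thesis by (rule diffeology_cong[OF D'])
qed

lemma tangent_iso_inv_smooth:
  fixes D :: "nat \<Rightarrow> rn set \<Rightarrow> (rn \<Rightarrow> 'v::real_vector) \<Rightarrow> bool"
  assumes fine: "fine_diffeology D" and p: "D n W p"
  shows "T_diff UNIV D 0 n W (inv_into (Tsp D 0) (tangent_iso D 0) \<circ> p)"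
  unfolding T_diff_def hector_def
proof (intro allI impI, elim conjE)
  fix D' :: "nat \<Rightarrow> rn set \<Rightarrow> (rn \<Rightarrow> 'v \<times> ('v pidx \<Rightarrow> rn) set) \<Rightarrow> bool"
  assume D': "diffeology (TX UNIV D) D'"
    and gen: "\<forall>n U f. D n U f \<and> connected_Rn n U \<longrightarrow> D' (2 * n) (tanU n U) (Tmap D n U f)"
  let ?\<psi> = "inv_into (Tsp D 0) (tangent_iso D 0)"
  have W: "open_Rn n W" by (rule fine_plot_domain_open[of D n W p, OF fine p])
  have "\<forall>u\<in>W. (0, ?\<psi> (p u)) \<in> TX UNIV D"
    using bij_betw_tangent_iso[OF fine] unfolding TX_def by (auto intro: inv_into_into simp: bij_betw_def)
  moreover have "\<exists>N. open_Rn n N \<and> u \<in> N \<and> N \<subseteq> W \<and> D' n N (\<lambda>w. (0, ?\<psi> (p w)))" if u: "u \<in> W" for u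
  proof -
    obtain N where N: "open_Rn n N" "u \<in> N" "N \<subseteq> W" "smooth_lincomb_on n N p"
      using fine_plotI[of D n W p, OF fine p] u by (rule fine_plotE)
    obtain K ws r where "\<forall>k<(K::nat). smooth_real n N (r k)" "\<forall>y\<in>N. p y = (\<Sum>k<K. r k y *\<^sub>R ws k)"
      using N(4) by (rule smooth_lincomb_onE)
    moreover have "D' (2 * K) (tanU K (Rn K)) (Tmap D K (Rn K) (lincomb K ws))"
      using gen fine_plot_lincomb[OF fine] connected_Rn_Rn by blast
    ultimately have "D' n N (\<lambda>w. (0, ?\<psi> (p w)))"
      using inv_tangent_iso_lincomb_plot[OF fine D' _ N(1)] by blast
    thus ?thesis using N by blast
  qed
  ultimately show "D' n W (\<lambda>w. (0, (?\<psi> \<circ> p) w))"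
    using diffeology_sheaf[OF D' W] by (simp add: comp_def)
qed

theorem proposition4p22:
  fixes D :: "nat \<Rightarrow> rn set \<Rightarrow> (rn \<Rightarrow> 'v::real_vector) \<Rightarrow> bool"
  assumes "fine_diffeology D"
  shows "\<exists>\<phi>. bij_betw \<phi> (Tsp D 0) (UNIV :: 'v set) \<and>
           (\<forall>A\<in>Tsp D 0. \<forall>B\<in>Tsp D 0. \<phi> (T_add D 0 A B) = \<phi> A + \<phi> B) \<and>
           (\<forall>r. \<forall>A\<in>Tsp D 0. \<phi> (T_scale D 0 r A) = r *\<^sub>R \<phi> A) \<and>
           (\<forall>n W q. T_diff UNIV D 0 n W q \<longrightarrow> D n W (\<phi> \<circ> q)) \<and>
           (\<forall>n W p. D n W p \<longrightarrow> T_diff UNIV D 0 n W (inv_into (Tsp D 0) \<phi> \<circ> p))"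
proof (intro exI[of _ "tangent_iso D 0"] conjI allI ballI impI)
  show "bij_betw (tangent_iso D 0) (Tsp D 0) UNIV" by (rule bij_betw_tangent_iso[OF assms])
  show "tangent_iso D 0 (T_add D 0 A B) = tangent_iso D 0 A + tangent_iso D 0 B"
    if "A \<in> Tsp D 0" "B \<in> Tsp D 0" for A B using tangent_iso_add[OF assms that] .
  show "tangent_iso D 0 (T_scale D 0 r A) = r *\<^sub>R tangent_iso D 0 A"
    if "A \<in> Tsp D 0" for r A using tangent_iso_scale[OF assms that] .
  show "D n W (tangent_iso D 0 \<circ> q)" if "T_diff UNIV D 0 n W q" for n W q
    using tangent_iso_smooth[OF assms that] .
  show "T_diff UNIV D 0 n W (inv_into (Tsp D 0) (tangent_iso D 0) \<circ> p)" if "D n W p" for n W p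
    using tangent_iso_inv_smooth[of D n W p, OF assms that] .
qed

end
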